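(* Let $\Omega\subset\mathbb{R}^N$ be a smooth ($C^2$), strictly convex and bounded domain and let $g\colon\mathbb{R}^N\setminus\Omega\to\mathbb{R}$ be continuous and bounded. Let $\{u_s\}_{s\in(0,1)}$ be a uniformly bounded family such that each $u_s$ is a viscosity subsolution of the nonlocal Dirichlet problem $$\inf_{z\in\mathbb{S}^{N-1}} c(s)\int_{\mathbb{R}}\frac{u(x+tz)-u(x)}{|t|^{1+2s}}\,dt=0 \ \text{ in }\Omega,\qquad u=g\ \text{ in }\mathbb{R}^N\setminus\Omega.$$ Then the upper half-relaxed limit $u^*=\limsup^*_{s\nearrow1}u_s$ is a viscosity subsolution of the local problem $$\inf_{z\in\mathbb{S}^{N-1}}\langle D^2u(x)z,z\rangle=0\ \text{ in }\Omega,\qquad u=g\ \text{ on }\partial\Omega.$$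
   Context: Strictly convex: the open segment between any two points of $\overline\Omega$ lies in $\Omega$. $c(s)=\frac{2^{2s}s\,\Gamma(s+1/2)}{\pi^{1/2}\Gamma(1-s)}$, $\mathbb{S}^{N-1}$ the unit sphere. Nonlocal viscosity subsolution: for $u\colon\overline\Omega\to\mathbb{R}$ let $u^g=u$ in $\Omega$, $u^g=g$ in $\mathbb{R}^N\setminus\overline\Omega$, $u^g=\max\{u,g\}$ on $\partial\Omega$; for $\delta>0$, $\phi\in C^2(\mathbb{R}^N)$, $z\in\mathbb{S}^{N-1}$ let $E_{z,\delta}(u,\phi,x)=c(s)\int_{-\delta}^{\delta}\frac{\phi(x+tz)-\phi(x)}{|t|^{1+2s}}dt+c(s)\int_{\mathbb{R}\setminus(-\delta,\delta)}\frac{u^g(x+tz)-u(x)}{|t|^{1+2s}}dt$ and $E_\delta(u,\phi,x)=-\inf_{z\in\mathbb{S}^{N-1}}E_{z,\delta}(u,\phi,x)$. A bounded upper semicontinuous $u\colon\mathbb{R}^N\to\mathbb{R}$ is a viscosity subsolution of the nonlocal problem if $u\le g$ in $\mathbb{R}^N\setminus\overline\Omega$ and for each $\delta>0$ and $\phi\in C^2(\mathbb{R}^N)$ such that $x_0$ is a maximum point of $u-\phi$ in $B_\delta(x_0)$: $E_\delta(u^g,\phi,x_0)\le0$ if $x_0\in\Omega$, and $\min\{E_\delta(u^g,\phi,x_0),u(x_0)-g(x_0)\}\le0$ if $x_0\in\partial\Omega$. Local viscosity subsolution: $u\colon\overline\Omega\to\mathbb{R}$ with $u\le g$ on $\partial\Omega$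 such that for every $\psi\in C^2$ for which $u-\psi$ has a strict local maximum at some $x\in\Omega$, $\inf_{z\in\mathbb{S}^{N-1}}\langle D^2\psi(x)z,z\rangle\ge0$. Upper half-relaxed limit: $u^*(x)=\sup\{\limsup_{k\to\infty}u_{s_k}(x_k): x_k\to x,\ s_k\nearrow1\}$ (equivalently $\lim_{r\to0}\sup\{u_s(y):|y-x|<r,\ 1-r<s<1\}$). *)

theory Defs
  imports "HOL-Analysis.Analysis"
begin

definition C2_on :: "'a::euclidean_space set \<Rightarrow> ('a \<Rightarrow> real) \<Rightarrow> ('a \<Rightarrow> 'a) \<Rightarrow> ('a \<Rightarrow> 'a \<Rightarrow>\<^sub>L 'a) \<Rightarrow> bool" where
  "C2_on S f f' H \<longleftrightarrow>
     (\<forall>x\<in>S. (f has_derivative (\<lambda>h. f' x \<bullet> h)) (at x) \<and>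
             (f' has_derivative (\<lambda>h. blinfun_apply (H x) h)) (at x)) \<and>
     continuous_on S H"

definition C2_domain :: "'a::euclidean_space set \<Rightarrow> bool" where
  "C2_domain \<Omega> \<longleftrightarrow> open \<Omega> \<and> connected \<Omega> \<and> \<Omega> \<noteq> {} \<and>
     (\<forall>x0\<in>frontier \<Omega>. \<exists>r>0. \<exists>\<rho> \<rho>' H. C2_on (ball x0 r) \<rho> \<rho>' H \<and> \<rho>' x0 \<noteq> 0 \<and>
        \<Omega> \<inter> ball x0 r = {x\<in>ball x0 r. \<rho> x < 0})"

definition strictly_convex :: "'a::euclidean_space set \<Rightarrow> bool" where
  "strictly_convex \<Omega> \<longleftrightarrow> (\<forall>a\<in>closure \<Omega>. \<forall>b\<in>closure \<Omega>. open_segment a b \<subseteq> \<Omega>)"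

definition usc :: "('a::metric_space \<Rightarrow> real) \<Rightarrow> bool" where
  "usc u \<longleftrightarrow> (\<forall>x. \<forall>e>0. \<exists>r>0. \<forall>y. dist y x < r \<longrightarrow> u y < u x + e)"

definition c_frac :: "real \<Rightarrow> real" where
  "c_frac s = (2::real) powr (2 * s) * s * Gamma (s + 1/2) / (sqrt pi * Gamma (1 - s))"

definition ext_g :: "'a::euclidean_space set \<Rightarrow> ('a \<Rightarrow> real) \<Rightarrow> ('a \<Rightarrow> real) \<Rightarrow> 'a \<Rightarrow> real" where
  "ext_g \<Omega> g u y = (if y \<in> \<Omega> then u y else if y \<notin> closure \<Omega> then g y else max (u y) (g y))"

text \<open>E_{z,delta}(u,phi,x). The (principal value) integral over (-delta,delta) of the smooth
  test function is written in its symmetrised, absolutely convergent form.\<close>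
definition E_z :: "real \<Rightarrow> 'a::euclidean_space set \<Rightarrow> ('a \<Rightarrow> real) \<Rightarrow> ('a \<Rightarrow> real) \<Rightarrow> ('a \<Rightarrow> real)
                   \<Rightarrow> 'a \<Rightarrow> real \<Rightarrow> 'a \<Rightarrow> real" where
  "E_z s \<Omega> g u \<phi> x \<delta> z =
     c_frac s * integral {0<..<\<delta>} (\<lambda>t. (\<phi> (x + t *\<^sub>R z) + \<phi> (x - t *\<^sub>R z) - 2 * \<phi> x) / t powr (1 + 2 * s))
   + c_frac s * integral {t. \<delta> \<le> \<bar>t\<bar>} (\<lambda>t. (ext_g \<Omega> g u (x + t *\<^sub>R z) - u x) / \<bar>t\<bar> powr (1 + 2 * s))"

definition E_delta :: "real \<Rightarrow> 'a::euclidean_space set \<Rightarrow> ('a \<Rightarrow> real) \<Rightarrow> ('a \<Rightarrow> real) \<Rightarrow> ('a \<Rightarrow> real)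
                   \<Rightarrow> 'a \<Rightarrow> real \<Rightarrow> real" where
  "E_delta s \<Omega> g u \<phi> x \<delta> = - (INF z\<in>sphere 0 1. E_z s \<Omega> g u \<phi> x \<delta> z)"

definition nonlocal_visc_sub :: "real \<Rightarrow> 'a::euclidean_space set \<Rightarrow> ('a \<Rightarrow> real) \<Rightarrow> ('a \<Rightarrow> real) \<Rightarrow> bool" where
  "nonlocal_visc_sub s \<Omega> g u \<longleftrightarrow>
     bounded (range u) \<and> usc u \<and> (\<forall>x. x \<notin> closure \<Omega> \<longrightarrow> u x \<le> g x) \<and>
     (\<forall>\<delta>>0. \<forall>\<phi> \<phi>' H x0. C2_on UNIV \<phi> \<phi>' H \<longrightarrow>
        (\<forall>y\<in>ball x0 \<delta>. u y - \<phi> y \<le> u x0 - \<phi> x0) \<longrightarrow>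
        (x0 \<in> \<Omega> \<longrightarrow> E_delta s \<Omega> g (ext_g \<Omega> g u) \<phi> x0 \<delta> \<le> 0) \<and>
        (x0 \<in> frontier \<Omega> \<longrightarrow> min (E_delta s \<Omega> g (ext_g \<Omega> g u) \<phi> x0 \<delta>) (u x0 - g x0) \<le> 0))"

definition local_visc_sub :: "'a::euclidean_space set \<Rightarrow> ('a \<Rightarrow> real) \<Rightarrow> ('a \<Rightarrow> real) \<Rightarrow> bool" where
  "local_visc_sub \<Omega> g u \<longleftrightarrow>
     (\<forall>x\<in>frontier \<Omega>. u x \<le> g x) \<and>
     (\<forall>\<psi> \<psi>' H x. C2_on UNIV \<psi> \<psi>' H \<longrightarrow> x \<in> \<Omega> \<longrightarrow>
        (\<exists>r>0. \<forall>y\<in>ball x r \<inter> closure \<Omega>. y \<noteq> x \<longrightarrow> u y - \<psi> y < u x - \<psi> x) \<longrightarrow>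
        (INF z\<in>sphere 0 1. (H x) z \<bullet> z) \<ge> 0)"

text \<open>Upper half-relaxed limit as s increases to 1: lim_{r->0} sup{u_s(y) : |y-x|<r, 1-r<s<1}
  (the sup is decreasing in r, so the limit is the infimum over r > 0).\<close>
definition upper_relaxed_limit :: "(real \<Rightarrow> 'a::euclidean_space \<Rightarrow> real) \<Rightarrow> 'a \<Rightarrow> real" where
  "upper_relaxed_limit u x =
     (INF r\<in>{0<..}. SUP p\<in>{(s, y). dist y x < r \<and> 1 - r < s \<and> 0 < s \<and> s < 1}. u (fst p) (snd p))"

end

(*
  Everything rests on one estimate for a C^2 test function phi: if its second differences
  phi(x + t z) + phi(x - t z) - 2 phi(x) are at most -eta t^2 for 0 < t < delta, and B bounds
  both u_s and g, then E_z <= c(s) (-eta delta^(2-2s)/(2-2s) + 2 B delta^(-2s)/s).  The near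
  part blows up like 1/(1-s), so E_delta > 0 once s is close to 1.

  At an interior point x where psi touches u^* strictly from above and <D^2 psi(x) z, z> < 0,
  the maximum of u_s - psi over a small closed ball is attained, for s close to 1, at points
  near x (by the definition of the relaxed limit and strictness).  There psi is uniformly
  concave along z, contradicting the subsolution property of u_s.

  At a boundary point x0, strict convexity gives a unit normal nu with nu.(y - x0) bounded
  away from 0 on closure Omega outside any ball around x0.  From it we build a C^2 barrier
  equal to g(x0) + eps at x0, above g outside Omega, and with second differences exactly
  -2 t^2 along nu at points of closure Omega.  A maximum of u_s minus the barrier cannot lie in
  Omega, and elsewhere u_s <= g <= barrier; hence u_s lies below the barrier for s close to 1
  and u^*(x0) <= g(x0) + eps.
*)

theory Submission
  imports Defs
begin

section \<open>The nonlocal operator on smooth test functions\<close>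

lemma c_frac_pos: "0 < s \<Longrightarrow> s < 1 \<Longrightarrow> 0 < c_frac s"
  unfolding c_frac_def by (intro divide_pos_pos mult_pos_pos Gamma_real_pos) auto

lemma square_div_powr:
  fixes t s :: real
  assumes "0 < t"
  shows "t\<^sup>2 / t powr (1 + 2 * s) = t powr (1 - 2 * s)"
proof -
  have "t powr (1 - 2 * s) = t powr (2 - (1 + 2 * s))" by (simp add: algebra_simps)
  also have "\<dots> = t powr 2 / t powr (1 + 2 * s)" by (rule powr_diff)
  also have "t powr 2 = t\<^sup>2" using assms by (simp only: powr_numeral less_imp_le)
  finally show ?thesis by simp
qed

lemma near_kernel_has_integral:
  fixes s \<delta> :: real
  assumes "0 < s" "s < 1" "0 < \<delta>"
  shows "((\<lambda>t. t powr (1 - 2 * s)) has_integral \<delta> powr (2 - 2 * s) / (2 - 2 * s)) {0<..<\<delta>}"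
proof -
  have "((\<lambda>t. t powr (1 - 2 * s)) has_integral \<delta> powr ((1 - 2 * s) + 1) / ((1 - 2 * s) + 1)) {0..\<delta>}"
    by (rule has_integral_powr_from_0) (use assms in auto)
  then have "((\<lambda>t. t powr (1 - 2 * s)) has_integral \<delta> powr (2 - 2 * s) / (2 - 2 * s)) (box 0 \<delta>)"
    using has_integral_open_interval[of "\<lambda>t. t powr (1 - 2 * s)" _ 0 \<delta>] by simp
  then show ?thesis by (simp add: box_real)
qed

lemma far_kernel_has_integral:
  fixes s \<delta> :: real
  assumes "0 < s" "0 < \<delta>"
  shows "((\<lambda>t. \<bar>t\<bar> powr (-(1 + 2 * s))) has_integral \<delta> powr (-2 * s) / s) {t. \<delta> \<le> \<bar>t\<bar>}"
proof -
  have "((\<lambda>t. t powr (-(1 + 2 * s))) has_integral -(\<delta> powr (-(1 + 2 * s) + 1)) / (-(1 + 2 * s) + 1)) {\<delta>..}"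
    by (rule has_integral_powr_to_inf) (use assms in auto)
  moreover have "-(\<delta> powr (-(1 + 2 * s) + 1)) / (-(1 + 2 * s) + 1) = \<delta> powr (-2 * s) / (2 * s)"
    using assms by (simp add: field_simps)
  ultimately have "((\<lambda>t. t powr (-(1 + 2 * s))) has_integral \<delta> powr (-2 * s) / (2 * s)) {\<delta>..}"
    by simp
  then have R: "((\<lambda>t. \<bar>t\<bar> powr (-(1 + 2 * s))) has_integral \<delta> powr (-2 * s) / (2 * s)) {\<delta>..}"
    by (rule has_integral_eq[rotated]) (use assms in auto)
  have "(\<lambda>t. \<bar>t\<bar> powr (-(1 + 2 * s))) absolutely_integrable_on {\<delta>..}"
    using R by (intro nonnegative_absolutely_integrable_1) (auto simp: has_integral_integrable)
  then have "(\<lambda>t. \<bar>- t\<bar> powr (-(1 + 2 * s))) absolutely_integrable_on {\<delta>..} \<and>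
        integral {\<delta>..} (\<lambda>t. \<bar>- t\<bar> powr (-(1 + 2 * s))) = \<delta> powr (-2 * s) / (2 * s)"
    using R by (simp add: integral_unique)
  then have "(\<lambda>t. \<bar>t\<bar> powr (-(1 + 2 * s))) absolutely_integrable_on {..-\<delta>} \<and>
        integral {..-\<delta>} (\<lambda>t. \<bar>t\<bar> powr (-(1 + 2 * s))) = \<delta> powr (-2 * s) / (2 * s)"
    by (subst (asm) has_absolute_integral_reflect_real[where B="{..-\<delta>}"]) auto
  then have L: "((\<lambda>t. \<bar>t\<bar> powr (-(1 + 2 * s))) has_integral \<delta> powr (-2 * s) / (2 * s)) {..-\<delta>}"
    by (metis absolutely_integrable_on_def has_integral_integral)
  have "((\<lambda>t. \<bar>t\<bar> powr (-(1 + 2 * s))) has_integral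
          \<delta> powr (-2 * s) / (2 * s) + \<delta> powr (-2 * s) / (2 * s)) ({..-\<delta>} \<union> {\<delta>..})"
  proof (rule has_integral_Un[OF L R])
    have "{..-\<delta>} \<inter> {\<delta>..} = {}" using assms by auto
    then show "negligible ({..-\<delta>} \<inter> {\<delta>..})" by simp
  qed
  moreover have "{..-\<delta>} \<union> {\<delta>..} = {t. \<delta> \<le> \<bar>t\<bar>}" by auto
  ultimately show ?thesis using assms by (simp add: field_simps)
qed

lemma far_integral_abs_le:
  fixes F :: "real \<Rightarrow> real"
  assumes "0 < s" "0 < \<delta>" "\<And>t. \<bar>F t\<bar> \<le> B"
  shows "\<bar>integral {t. \<delta> \<le> \<bar>t\<bar>} (\<lambda>t. F t / \<bar>t\<bar> powr (1 + 2 * s))\<bar> \<le> B * (\<delta> powr (-2 * s) / s)"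
proof (cases "(\<lambda>t. F t / \<bar>t\<bar> powr (1 + 2 * s)) integrable_on {t. \<delta> \<le> \<bar>t\<bar>}")
  case True
  have G: "((\<lambda>t. B * \<bar>t\<bar> powr (-(1 + 2 * s))) has_integral B * (\<delta> powr (-2 * s) / s)) {t. \<delta> \<le> \<bar>t\<bar>}"
    by (rule has_integral_mult_right[OF far_kernel_has_integral[OF assms(1,2)]])
  have "norm (integral {t. \<delta> \<le> \<bar>t\<bar>} (\<lambda>t. F t / \<bar>t\<bar> powr (1 + 2 * s)))
        \<le> integral {t. \<delta> \<le> \<bar>t\<bar>} (\<lambda>t. B * \<bar>t\<bar> powr (-(1 + 2 * s)))"
  proof (rule integral_norm_bound_integral[OF True has_integral_integrable[OF G]])
    fix t
    have "norm (F t / \<bar>t\<bar> powr (1 + 2 * s)) = \<bar>F t\<bar> * inverse (\<bar>t\<bar> powr (1 + 2 * s))"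
      by (simp add: divide_inverse abs_mult)
    also have "\<dots> = \<bar>F t\<bar> * \<bar>t\<bar> powr (-(1 + 2 * s))"
      by (simp only: powr_minus)
    also have "\<dots> \<le> B * \<bar>t\<bar> powr (-(1 + 2 * s))"
      by (rule mult_right_mono[OF assms(3)]) simp
    finally show "norm (F t / \<bar>t\<bar> powr (1 + 2 * s)) \<le> B * \<bar>t\<bar> powr (-(1 + 2 * s))" .
  qed
  then show ?thesis using integral_unique[OF G] by simp
next
  case False
  have "0 \<le> B" using assms(3)[of 0] by linarith
  with False show ?thesis using assms by (simp add: not_integrable_integral)
qed

definition second_diff :: "('a::real_vector \<Rightarrow> real) \<Rightarrow> 'a \<Rightarrow> 'a \<Rightarrow> real \<Rightarrow> real" where
  "second_diff \<phi> x z t = \<phi> (x + t *\<^sub>R z) + \<phi> (x - t *\<^sub>R z) - 2 * \<phi> x"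

lemma E_z_eq:
  "E_z s \<Omega> g v \<phi> x \<delta> z =
     c_frac s * integral {0<..<\<delta>} (\<lambda>t. second_diff \<phi> x z t / t powr (1 + 2 * s))
   + c_frac s * integral {t. \<delta> \<le> \<bar>t\<bar>} (\<lambda>t. (ext_g \<Omega> g v (x + t *\<^sub>R z) - v x) / \<bar>t\<bar> powr (1 + 2 * s))"
  unfolding E_z_def second_diff_def ..

lemma near_integral_le:
  fixes D :: "real \<Rightarrow> real"
  assumes s: "0 < s" "s < 1" and \<delta>: "0 < \<delta>"
    and int: "(\<lambda>t. D t / t powr (1 + 2 * s)) integrable_on {0<..<\<delta>}"
    and le: "\<And>t. 0 < t \<Longrightarrow> t < \<delta> \<Longrightarrow> D t \<le> U * t\<^sup>2"
  shows "integral {0<..<\<delta>} (\<lambda>t. D t / t powr (1 + 2 * s)) \<le> U * (\<delta> powr (2 - 2 * s) / (2 - 2 * s))"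
proof -
  have P: "((\<lambda>t. U * t powr (1 - 2 * s)) has_integral U * (\<delta> powr (2 - 2 * s) / (2 - 2 * s))) {0<..<\<delta>}"
    by (rule has_integral_mult_right[OF near_kernel_has_integral[OF s \<delta>]])
  have "integral {0<..<\<delta>} (\<lambda>t. D t / t powr (1 + 2 * s)) \<le> integral {0<..<\<delta>} (\<lambda>t. U * t powr (1 - 2 * s))"
  proof (rule integral_le[OF int has_integral_integrable[OF P]])
    fix t :: real assume t: "t \<in> {0<..<\<delta>}"
    then have "D t / t powr (1 + 2 * s) \<le> U * t\<^sup>2 / t powr (1 + 2 * s)"
      using le by (intro divide_right_mono) auto
    also have "\<dots> = U * (t\<^sup>2 / t powr (1 + 2 * s))" by simp
    also have "\<dots> = U * t powr (1 - 2 * s)"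
      using t by (simp add: square_div_powr)
    finally show "D t / t powr (1 + 2 * s) \<le> U * t powr (1 - 2 * s)" .
  qed
  also have "\<dots> = U * (\<delta> powr (2 - 2 * s) / (2 - 2 * s))"
    using P by (rule integral_unique)
  finally show ?thesis .
qed

lemma near_integral_ge:
  fixes D :: "real \<Rightarrow> real"
  assumes s: "0 < s" "s < 1" and \<delta>: "0 < \<delta>"
    and int: "(\<lambda>t. D t / t powr (1 + 2 * s)) integrable_on {0<..<\<delta>}"
    and ge: "\<And>t. 0 < t \<Longrightarrow> t < \<delta> \<Longrightarrow> L * t\<^sup>2 \<le> D t"
  shows "L * (\<delta> powr (2 - 2 * s) / (2 - 2 * s)) \<le> integral {0<..<\<delta>} (\<lambda>t. D t / t powr (1 + 2 * s))"
proof -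
  have "integral {0<..<\<delta>} (\<lambda>t. - D t / t powr (1 + 2 * s)) \<le> - L * (\<delta> powr (2 - 2 * s) / (2 - 2 * s))"
  proof (rule near_integral_le[OF s \<delta>])
    show "(\<lambda>t. - D t / t powr (1 + 2 * s)) integrable_on {0<..<\<delta>}"
      using integrable_neg[OF int] by simp
    fix t :: real assume "0 < t" "t < \<delta>"
    then show "- D t \<le> - L * t\<^sup>2" using ge[of t] by linarith
  qed
  then show ?thesis
    using integral_neg[of "{0<..<\<delta>}" "\<lambda>t. D t / t powr (1 + 2 * s)"] by simp
qed

lemma C2_line_derivatives:
  assumes "C2_on UNIV \<psi> \<psi>' H"
  shows "((\<lambda>\<tau>. \<psi> (y + \<tau> *\<^sub>R w)) has_real_derivative \<psi>' (y + \<tau> *\<^sub>R w) \<bullet> w) (at \<tau>)"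
    and "((\<lambda>\<tau>. \<psi>' (y + \<tau> *\<^sub>R w) \<bullet> w) has_real_derivative (H (y + \<tau> *\<^sub>R w)) w \<bullet> w) (at \<tau>)"
proof -
  have d1: "(\<psi> has_derivative (\<lambda>h. \<psi>' x \<bullet> h)) (at x)"
   and d2: "(\<psi>' has_derivative (\<lambda>h. blinfun_apply (H x) h)) (at x)" for x
    using assms unfolding C2_on_def by auto
  have l: "((\<lambda>\<tau>. y + \<tau> *\<^sub>R w) has_derivative (\<lambda>h. h *\<^sub>R w)) (at \<tau>)"
    by (auto intro!: derivative_eq_intros)
  show "((\<lambda>\<tau>. \<psi> (y + \<tau> *\<^sub>R w)) has_real_derivative \<psi>' (y + \<tau> *\<^sub>R w) \<bullet> w) (at \<tau>)"
    using has_derivative_compose[OF l d1] by (rule has_derivative_imp_has_field_derivative) simp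
  have "((\<lambda>\<tau>. \<psi>' (y + \<tau> *\<^sub>R w) \<bullet> w) has_derivative (\<lambda>h. (H (y + \<tau> *\<^sub>R w)) (h *\<^sub>R w) \<bullet> w)) (at \<tau>)"
    using has_derivative_compose[OF l d2] by (auto intro!: derivative_eq_intros simp: o_def)
  then show "((\<lambda>\<tau>. \<psi>' (y + \<tau> *\<^sub>R w) \<bullet> w) has_real_derivative (H (y + \<tau> *\<^sub>R w)) w \<bullet> w) (at \<tau>)"
    by (rule has_derivative_imp_has_field_derivative) (simp add: blinfun.scaleR_right)
qed

lemma C2_taylor_on_line:
  assumes "C2_on UNIV \<psi> \<psi>' H" "0 < t"
  obtains \<theta> where "0 < \<theta>" "\<theta> < t"
    "\<psi> (y + t *\<^sub>R w) = \<psi> y + (\<psi>' y \<bullet> w) * t + ((H (y + \<theta> *\<^sub>R w)) w \<bullet> w) / 2 * t\<^sup>2"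
proof -
  define diff :: "nat \<Rightarrow> real \<Rightarrow> real" where
    "diff = (\<lambda>m \<tau>. if m = 0 then \<psi> (y + \<tau> *\<^sub>R w) else if m = 1 then \<psi>' (y + \<tau> *\<^sub>R w) \<bullet> w
              else (H (y + \<tau> *\<^sub>R w)) w \<bullet> w)"
  have "\<exists>\<theta>. 0 < \<theta> \<and> \<theta> < t \<and>
    diff 0 t = (\<Sum>m<2. diff m 0 / fact m * (t - 0) ^ m) + diff 2 \<theta> / fact 2 * (t - 0)\<^sup>2"
  proof (rule Taylor_up[where a=0 and c=0 and b=t and f="diff 0"])
    show "\<forall>m \<tau>. m < 2 \<and> 0 \<le> \<tau> \<and> \<tau> \<le> t \<longrightarrow> DERIV (diff m) \<tau> :> diff (Suc m) \<tau>"
    proof (intro allI impI)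
      fix m :: nat and \<tau> :: real assume "m < 2 \<and> 0 \<le> \<tau> \<and> \<tau> \<le> t"
      then have "m = 0 \<or> m = 1" by auto
      then show "DERIV (diff m) \<tau> :> diff (Suc m) \<tau>"
        using C2_line_derivatives[OF assms(1), of y w \<tau>] unfolding diff_def
        by (auto simp: fun_eq_iff)
    qed
  qed (use assms in auto)
  then obtain \<theta> where "0 < \<theta>" "\<theta> < t"
    "diff 0 t = (\<Sum>m<2. diff m 0 / fact m * (t - 0) ^ m) + diff 2 \<theta> / fact 2 * (t - 0)\<^sup>2"
    by blast
  then show ?thesis
    by (intro that[of \<theta>]) (simp_all add: diff_def numeral_2_eq_2 lessThan_Suc)
qed

lemma C2_second_diff_mean_value:
  assumes "C2_on UNIV \<psi> \<psi>' H" "0 < t"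
  obtains \<theta>1 \<theta>2 where "0 < \<theta>1" "\<theta>1 < t" "0 < \<theta>2" "\<theta>2 < t"
    "second_diff \<psi> y z t = t\<^sup>2 / 2 * ((H (y + \<theta>1 *\<^sub>R z)) z \<bullet> z + (H (y - \<theta>2 *\<^sub>R z)) z \<bullet> z)"
proof -
  obtain \<theta>1 where 1: "0 < \<theta>1" "\<theta>1 < t"
     "\<psi> (y + t *\<^sub>R z) = \<psi> y + (\<psi>' y \<bullet> z) * t + ((H (y + \<theta>1 *\<^sub>R z)) z \<bullet> z) / 2 * t\<^sup>2"
    using C2_taylor_on_line[OF assms] by blast
  obtain \<theta>2 where 2: "0 < \<theta>2" "\<theta>2 < t"
     "\<psi> (y + t *\<^sub>R (-z)) = \<psi> y + (\<psi>' y \<bullet> (-z)) * t + ((H (y + \<theta>2 *\<^sub>R (-z))) (-z) \<bullet> (-z)) / 2 * t\<^sup>2"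
    using C2_taylor_on_line[OF assms] by blast
  from 2(3) have "\<psi> (y - t *\<^sub>R z) = \<psi> y - (\<psi>' y \<bullet> z) * t + ((H (y - \<theta>2 *\<^sub>R z)) z \<bullet> z) / 2 * t\<^sup>2"
    by (simp add: blinfun.minus_right)
  with 1 2(1,2) show ?thesis
    by (intro that[of \<theta>1 \<theta>2]) (simp_all add: second_diff_def algebra_simps)
qed

lemma C2_second_diff_le:
  assumes "C2_on UNIV \<psi> \<psi>' H" "0 < t"
    and "\<And>\<theta>. \<bar>\<theta>\<bar> < t \<Longrightarrow> (H (y + \<theta> *\<^sub>R z)) z \<bullet> z \<le> U"
  shows "second_diff \<psi> y z t \<le> U * t\<^sup>2"
proof -
  obtain \<theta>1 \<theta>2 where "0 < \<theta>1" "\<theta>1 < t" "0 < \<theta>2" "\<theta>2 < t"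
    and eq: "second_diff \<psi> y z t = t\<^sup>2 / 2 * ((H (y + \<theta>1 *\<^sub>R z)) z \<bullet> z + (H (y - \<theta>2 *\<^sub>R z)) z \<bullet> z)"
    by (rule C2_second_diff_mean_value[OF assms(1,2)])
  then have "(H (y + \<theta>1 *\<^sub>R z)) z \<bullet> z + (H (y - \<theta>2 *\<^sub>R z)) z \<bullet> z \<le> 2 * U"
    using assms(3)[of \<theta>1] assms(3)[of "-\<theta>2"] by auto
  then have "second_diff \<psi> y z t \<le> t\<^sup>2 / 2 * (2 * U)"
    unfolding eq by (rule mult_left_mono) simp
  then show ?thesis by (simp add: mult.commute)
qed

lemma C2_second_diff_ge:
  assumes "C2_on UNIV \<psi> \<psi>' H" "0 < t"
    and "\<And>\<theta>. \<bar>\<theta>\<bar> < t \<Longrightarrow> L \<le> (H (y + \<theta> *\<^sub>R z)) z \<bullet> z"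
  shows "L * t\<^sup>2 \<le> second_diff \<psi> y z t"
proof -
  obtain \<theta>1 \<theta>2 where "0 < \<theta>1" "\<theta>1 < t" "0 < \<theta>2" "\<theta>2 < t"
    and eq: "second_diff \<psi> y z t = t\<^sup>2 / 2 * ((H (y + \<theta>1 *\<^sub>R z)) z \<bullet> z + (H (y - \<theta>2 *\<^sub>R z)) z \<bullet> z)"
    by (rule C2_second_diff_mean_value[OF assms(1,2)])
  then have "2 * L \<le> (H (y + \<theta>1 *\<^sub>R z)) z \<bullet> z + (H (y - \<theta>2 *\<^sub>R z)) z \<bullet> z"
    using assms(3)[of \<theta>1] assms(3)[of "-\<theta>2"] by auto
  then have "t\<^sup>2 / 2 * (2 * L) \<le> second_diff \<psi> y z t"
    unfolding eq by (rule mult_left_mono) simp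
  then show ?thesis by (simp add: mult.commute)
qed

lemma C2_second_diff_abs_le:
  assumes "C2_on UNIV \<psi> \<psi>' H" "0 < t"
    and "\<And>\<theta>. \<bar>\<theta>\<bar> < t \<Longrightarrow> \<bar>(H (y + \<theta> *\<^sub>R z)) z \<bullet> z\<bar> \<le> C"
  shows "\<bar>second_diff \<psi> y z t\<bar> \<le> C * t\<^sup>2"
proof -
  have "- C * t\<^sup>2 \<le> second_diff \<psi> y z t"
    by (rule C2_second_diff_ge[OF assms(1,2)]) (use assms(3) in \<open>force simp: abs_le_iff\<close>)
  moreover have "second_diff \<psi> y z t \<le> C * t\<^sup>2"
    by (rule C2_second_diff_le[OF assms(1,2)]) (use assms(3) in \<open>force simp: abs_le_iff\<close>)
  ultimately show ?thesis by linarith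
qed

lemma C2_continuous:
  assumes "C2_on UNIV \<psi> \<psi>' H"
  shows "continuous_on UNIV \<psi>"
  using assms unfolding C2_on_def
  by (meson continuous_at_imp_continuous_on has_derivative_continuous UNIV_I)

lemma abs_blinfun_inner_le_norm:
  assumes "norm z = 1"
  shows "\<bar>blinfun_apply A z \<bullet> z\<bar> \<le> norm A"
proof -
  have "\<bar>blinfun_apply A z \<bullet> z\<bar> \<le> norm (blinfun_apply A z) * norm z" by (rule Cauchy_Schwarz_ineq2)
  also have "\<dots> \<le> norm A * norm z * norm z" by (rule mult_right_mono[OF norm_blinfun]) simp
  finally show ?thesis using assms by simp
qed

lemma C2_hessian_bounded_on_segments:
  assumes "C2_on UNIV \<phi> \<phi>' H"
  obtains C where "\<And>z \<theta>. norm z = 1 \<Longrightarrow> \<bar>\<theta>\<bar> < \<delta> \<Longrightarrow> \<bar>(H (x + \<theta> *\<^sub>R z)) z \<bullet> z\<bar> \<le> C"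
proof -
  have "continuous_on UNIV H" using assms unfolding C2_on_def by auto
  then have "compact (H ` cball x \<delta>)"
    by (intro compact_continuous_image) (auto intro: continuous_on_subset)
  then obtain C where C: "\<forall>A\<in>H ` cball x \<delta>. norm A \<le> C"
    using compact_imp_bounded bounded_iff by metis
  show ?thesis
  proof (rule that[of C])
    fix z :: 'a and \<theta> :: real assume z: "norm z = 1" and "\<bar>\<theta>\<bar> < \<delta>"
    then have "x + \<theta> *\<^sub>R z \<in> cball x \<delta>" by (simp add: dist_norm)
    then show "\<bar>(H (x + \<theta> *\<^sub>R z)) z \<bullet> z\<bar> \<le> C"
      using C abs_blinfun_inner_le_norm[OF z] by (meson image_eqI order_trans)
  qed
qed

lemma C2_near_integrable:
  assumes C2: "C2_on UNIV \<phi> \<phi>' H" and s: "0 < s" "s < 1" and \<delta>: "0 < \<delta>" and z: "norm z = 1"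
  shows "(\<lambda>t. second_diff \<phi> x z t / t powr (1 + 2 * s)) integrable_on {0<..<\<delta>}"
proof -
  obtain C where C: "\<And>z \<theta>. norm z = 1 \<Longrightarrow> \<bar>\<theta>\<bar> < \<delta> \<Longrightarrow> \<bar>(H (x + \<theta> *\<^sub>R z)) z \<bullet> z\<bar> \<le> C"
    using C2_hessian_bounded_on_segments[OF C2] by blast
  have "continuous_on {0<..<\<delta>} (\<lambda>t. second_diff \<phi> x z t / t powr (1 + 2 * s))"
    unfolding second_diff_def
    by (intro continuous_intros continuous_on_compose2[OF C2_continuous[OF C2]]) auto
  then have meas: "(\<lambda>t. second_diff \<phi> x z t / t powr (1 + 2 * s)) \<in> borel_measurable (lebesgue_on {0<..<\<delta>})"
    by (rule continuous_imp_measurable_on_sets_lebesgue) simp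
  have dom: "(\<lambda>t. C * t powr (1 - 2 * s)) integrable_on {0<..<\<delta>}"
    using has_integral_mult_right[OF near_kernel_has_integral[OF s \<delta>]] by (rule has_integral_integrable)
  have "(\<lambda>t. second_diff \<phi> x z t / t powr (1 + 2 * s)) absolutely_integrable_on {0<..<\<delta>}"
  proof (rule measurable_bounded_by_integrable_imp_absolutely_integrable[OF meas _ dom])
    fix t assume t: "t \<in> {0<..<\<delta>}"
    then have "\<bar>second_diff \<phi> x z t\<bar> \<le> C * t\<^sup>2"
      by (intro C2_second_diff_abs_le[OF C2]) (use C[OF z] in auto)
    then have "\<bar>second_diff \<phi> x z t\<bar> / t powr (1 + 2 * s) \<le> C * t\<^sup>2 / t powr (1 + 2 * s)"
      by (simp add: divide_right_mono)
    also have "\<dots> = C * t powr (1 - 2 * s)"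
      using t square_div_powr[of t s] by (metis greaterThanLessThan_iff times_divide_eq_right)
    finally show "norm (second_diff \<phi> x z t / t powr (1 + 2 * s)) \<le> C * t powr (1 - 2 * s)"
      by simp
  qed simp
  then show ?thesis by (rule absolutely_integrable_on_def[THEN iffD1, THEN conjunct1])
qed

lemma E_z_le:
  assumes s: "0 < s" "s < 1" and \<delta>: "0 < \<delta>"
    and int: "(\<lambda>t. second_diff \<phi> x z t / t powr (1 + 2 * s)) integrable_on {0<..<\<delta>}"
    and le: "\<And>t. 0 < t \<Longrightarrow> t < \<delta> \<Longrightarrow> second_diff \<phi> x z t \<le> U * t\<^sup>2"
    and far: "\<And>w. \<bar>ext_g \<Omega> g v w - v x\<bar> \<le> B"
  shows "E_z s \<Omega> g v \<phi> x \<delta> z \<le> c_frac s * (U * (\<delta> powr (2 - 2 * s) / (2 - 2 * s)) + B * (\<delta> powr (-2 * s) / s))"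
proof -
  have "\<bar>integral {t. \<delta> \<le> \<bar>t\<bar>} (\<lambda>t. (ext_g \<Omega> g v (x + t *\<^sub>R z) - v x) / \<bar>t\<bar> powr (1 + 2 * s))\<bar>
        \<le> B * (\<delta> powr (-2 * s) / s)"
    by (rule far_integral_abs_le[OF s(1) \<delta> far])
  then show ?thesis
    unfolding E_z_eq distrib_left[symmetric]
    using near_integral_le[OF s \<delta> int le] c_frac_pos[OF s] by (intro mult_left_mono) auto
qed

lemma E_z_ge:
  assumes s: "0 < s" "s < 1" and \<delta>: "0 < \<delta>"
    and int: "(\<lambda>t. second_diff \<phi> x z t / t powr (1 + 2 * s)) integrable_on {0<..<\<delta>}"
    and ge: "\<And>t. 0 < t \<Longrightarrow> t < \<delta> \<Longrightarrow> L * t\<^sup>2 \<le> second_diff \<phi> x z t"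
    and far: "\<And>w. \<bar>ext_g \<Omega> g v w - v x\<bar> \<le> B"
  shows "c_frac s * (L * (\<delta> powr (2 - 2 * s) / (2 - 2 * s)) - B * (\<delta> powr (-2 * s) / s)) \<le> E_z s \<Omega> g v \<phi> x \<delta> z"
proof -
  have "\<bar>integral {t. \<delta> \<le> \<bar>t\<bar>} (\<lambda>t. (ext_g \<Omega> g v (x + t *\<^sub>R z) - v x) / \<bar>t\<bar> powr (1 + 2 * s))\<bar>
        \<le> B * (\<delta> powr (-2 * s) / s)"
    by (rule far_integral_abs_le[OF s(1) \<delta> far])
  then show ?thesis
    unfolding E_z_eq distrib_left[symmetric]
    using near_integral_ge[OF s \<delta> int ge] c_frac_pos[OF s] by (intro mult_left_mono) auto
qed

lemma C2_E_z_bdd_below: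
  assumes C2: "C2_on UNIV \<phi> \<phi>' H" and s: "0 < s" "s < 1" and \<delta>: "0 < \<delta>"
    and far: "\<And>w. \<bar>ext_g \<Omega> g v w - v x\<bar> \<le> B"
  shows "bdd_below ((\<lambda>z. E_z s \<Omega> g v \<phi> x \<delta> z) ` sphere 0 1)"
proof -
  obtain C where C: "\<And>z \<theta>. norm z = 1 \<Longrightarrow> \<bar>\<theta>\<bar> < \<delta> \<Longrightarrow> \<bar>(H (x + \<theta> *\<^sub>R z)) z \<bullet> z\<bar> \<le> C"
    using C2_hessian_bounded_on_segments[OF C2] by blast
  show ?thesis
  proof (rule bdd_belowI2)
    fix z :: 'a assume "z \<in> sphere 0 1"
    then have z: "norm z = 1" by simp
    have "- C * t\<^sup>2 \<le> second_diff \<phi> x z t" if "0 < t" "t < \<delta>" for t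
      using C2_second_diff_abs_le[OF C2 that(1), of x z C] C[OF z] that by fastforce
    then show "c_frac s * (- C * (\<delta> powr (2 - 2 * s) / (2 - 2 * s)) - B * (\<delta> powr (-2 * s) / s))
               \<le> E_z s \<Omega> g v \<phi> x \<delta> z"
      by (rule E_z_ge[OF s \<delta> C2_near_integrable[OF C2 s \<delta> z] _ far])
  qed
qed

definition kernel_threshold :: "real \<Rightarrow> real \<Rightarrow> real \<Rightarrow> real" where
  "kernel_threshold \<eta> \<delta> B = max (1/2) (1 - \<eta> * \<delta>\<^sup>2 / (8 * B + 1))"

lemma kernel_threshold_lt_1: "0 < \<eta> \<Longrightarrow> 0 < \<delta> \<Longrightarrow> 0 \<le> B \<Longrightarrow> kernel_threshold \<eta> \<delta> B < 1"
  unfolding kernel_threshold_def by auto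

lemma near_part_dominates:
  fixes \<eta> \<delta> B s :: real
  assumes "0 < \<eta>" "0 < \<delta>" "0 \<le> B" "kernel_threshold \<eta> \<delta> B < s" "s < 1"
  shows "-\<eta> * (\<delta> powr (2 - 2 * s) / (2 - 2 * s)) + 2 * B * (\<delta> powr (-2 * s) / s) < 0"
proof -
  define q where "q = \<delta> powr (-2 * s)"
  have q0: "0 < q" unfolding q_def using assms by simp
  have "\<delta> powr (2 - 2 * s) = \<delta> powr (2 + (-2 * s))" by simp
  also have "\<dots> = \<delta> powr 2 * q" unfolding q_def by (rule powr_add)
  also have "\<delta> powr 2 = \<delta>\<^sup>2" using assms(2) by simp
  finally have e: "\<delta> powr (2 - 2 * s) = \<delta>\<^sup>2 * q" .
  have s2: "1/2 < s" and s3: "1 - \<eta> * \<delta>\<^sup>2 / (8 * B + 1) < s"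
    using assms(4) unfolding kernel_threshold_def by auto
  have B1: "0 < 8 * B + 1" using assms(3) by simp
  define a where "a = B * (1 - s)"
  define b where "b = \<eta> * \<delta>\<^sup>2"
  have "(1 - s) * (8 * B + 1) < b"
    using s3 B1 unfolding b_def by (simp add: field_simps)
  moreover have "(1 - s) * (8 * B + 1) = 8 * a + (1 - s)" unfolding a_def by (simp add: algebra_simps)
  ultimately have "8 * a < b" using assms(5) by linarith
  moreover have "b / 2 < b * s"
    using s2 assms(1,2) unfolding b_def by (simp add: field_simps)
  ultimately have "4 * B * (1 - s) < \<eta> * \<delta>\<^sup>2 * s" unfolding a_def b_def by (simp add: algebra_simps)
  then have "2 * B / s < \<eta> * \<delta>\<^sup>2 / (2 - 2 * s)"
    using assms s2 by (simp add: field_simps)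
  then have "q * (2 * B / s) < q * (\<eta> * \<delta>\<^sup>2 / (2 - 2 * s))"
    using q0 by (rule mult_strict_left_mono)
  then show ?thesis unfolding e q_def[symmetric] by (simp add: field_simps)
qed

lemma E_delta_pos_of_second_diff_le:
  assumes C2: "C2_on UNIV \<phi> \<phi>' H" and \<eta>: "0 < \<eta>" and \<delta>: "0 < \<delta>" and B: "0 \<le> B"
    and s: "kernel_threshold \<eta> \<delta> B < s" "s < 1" and z: "norm z = 1"
    and concave: "\<And>t. 0 < t \<Longrightarrow> t < \<delta> \<Longrightarrow> second_diff \<phi> x z t \<le> -\<eta> * t\<^sup>2"
    and far: "\<And>w. \<bar>ext_g \<Omega> g v w - v x\<bar> \<le> 2 * B"
  shows "0 < E_delta s \<Omega> g v \<phi> x \<delta>"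
proof -
  have s01: "0 < s" "s < 1" using s unfolding kernel_threshold_def by auto
  have "E_z s \<Omega> g v \<phi> x \<delta> z \<le> c_frac s * (-\<eta> * (\<delta> powr (2 - 2 * s) / (2 - 2 * s)) + 2 * B * (\<delta> powr (-2 * s) / s))"
    by (rule E_z_le[OF s01 \<delta> C2_near_integrable[OF C2 s01 \<delta> z] concave far])
  also have "\<dots> < 0"
    using c_frac_pos[OF s01] near_part_dominates[OF \<eta> \<delta> B s] by (rule mult_pos_neg)
  finally have "E_z s \<Omega> g v \<phi> x \<delta> z < 0" .
  moreover have "(INF z\<in>sphere 0 1. E_z s \<Omega> g v \<phi> x \<delta> z) \<le> E_z s \<Omega> g v \<phi> x \<delta> z"
    by (rule cINF_lower[OF C2_E_z_bdd_below[OF C2 s01 \<delta> far]]) (use z in simp)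
  ultimately show ?thesis unfolding E_delta_def by linarith
qed

lemma ext_g_abs_le:
  assumes "\<And>y. \<bar>v y\<bar> \<le> B" "\<And>y. y \<notin> \<Omega> \<Longrightarrow> \<bar>g y\<bar> \<le> B"
  shows "\<bar>ext_g \<Omega> g v y\<bar> \<le> B"
  using assms[of y] unfolding ext_g_def by auto

lemma ext_g_oscillation_le:
  assumes "\<And>y. \<bar>v y\<bar> \<le> B" "\<And>y. y \<notin> \<Omega> \<Longrightarrow> \<bar>g y\<bar> \<le> B"
  shows "\<bar>ext_g \<Omega> g (ext_g \<Omega> g v) w - ext_g \<Omega> g v x\<bar> \<le> 2 * B"
proof -
  have "\<bar>ext_g \<Omega> g v y\<bar> \<le> B" for y using ext_g_abs_le[OF assms] .
  then have "\<bar>ext_g \<Omega> g (ext_g \<Omega> g v) w\<bar> \<le> B" using ext_g_abs_le assms(2) by blast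
  with \<open>\<bar>ext_g \<Omega> g v x\<bar> \<le> B\<close> show ?thesis by linarith
qed

section \<open>The upper relaxed limit\<close>

definition relaxed_nbhd :: "real \<Rightarrow> 'a::metric_space \<Rightarrow> (real \<times> 'a) set" where
  "relaxed_nbhd r x = {(s, y). dist y x < r \<and> 1 - r < s \<and> 0 < s \<and> s < 1}"

definition relaxed_sup :: "(real \<Rightarrow> 'a::euclidean_space \<Rightarrow> real) \<Rightarrow> real \<Rightarrow> 'a \<Rightarrow> real" where
  "relaxed_sup u r x = (SUP p\<in>relaxed_nbhd r x. u (fst p) (snd p))"

lemma upper_relaxed_limit_eq_INF_relaxed_sup:
  "upper_relaxed_limit u x = (INF r\<in>{0<..}. relaxed_sup u r x)"
  unfolding upper_relaxed_limit_def relaxed_sup_def relaxed_nbhd_def by simp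

lemma relaxed_nbhd_nonempty: "0 < r \<Longrightarrow> relaxed_nbhd r x \<noteq> {}"
  unfolding relaxed_nbhd_def by (auto intro!: exI[of _ "max (1/2) (1 - r/2)"] exI[of _ x])

lemma relaxed_nbhd_mono: "r \<le> r' \<Longrightarrow> relaxed_nbhd r x \<subseteq> relaxed_nbhd r' x"
  unfolding relaxed_nbhd_def by auto

context
  fixes u :: "real \<Rightarrow> 'a::euclidean_space \<Rightarrow> real" and M :: real
  assumes bounded: "\<forall>s\<in>{0<..<1}. \<forall>x. \<bar>u s x\<bar> \<le> M"
begin

lemma bdd_above_relaxed_nbhd: "bdd_above ((\<lambda>p. u (fst p) (snd p)) ` relaxed_nbhd r x)"
  using bounded unfolding relaxed_nbhd_def by (intro bdd_aboveI2[of _ _ M]) (auto simp: abs_le_iff)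

lemma relaxed_sup_upper: "(s, y) \<in> relaxed_nbhd r x \<Longrightarrow> u s y \<le> relaxed_sup u r x"
  unfolding relaxed_sup_def using cSUP_upper[OF _ bdd_above_relaxed_nbhd] by fastforce

lemma relaxed_sup_lower_bound: "0 < r \<Longrightarrow> -M \<le> relaxed_sup u r x"
proof -
  assume "0 < r"
  then obtain s y where sy: "(s, y) \<in> relaxed_nbhd r x" using relaxed_nbhd_nonempty by fast
  then have "\<bar>u s y\<bar> \<le> M" using bounded unfolding relaxed_nbhd_def by auto
  then have "-M \<le> u s y" by linarith
  also have "\<dots> \<le> relaxed_sup u r x" by (rule relaxed_sup_upper[OF sy])
  finally show ?thesis .
qed

lemma upper_relaxed_limit_le_relaxed_sup: "0 < r \<Longrightarrow> upper_relaxed_limit u x \<le> relaxed_sup u r x"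
  unfolding upper_relaxed_limit_eq_INF_relaxed_sup
  by (rule cINF_lower) (auto intro!: bdd_belowI2 relaxed_sup_lower_bound)

lemma upper_relaxed_limit_ge:
  assumes "\<And>r. 0 < r \<Longrightarrow> c \<le> relaxed_sup u r x"
  shows "c \<le> upper_relaxed_limit u x"
  unfolding upper_relaxed_limit_eq_INF_relaxed_sup by (rule cINF_greatest) (use assms in auto)

lemma upper_relaxed_limit_le:
  assumes "0 < r" "\<And>s y. (s, y) \<in> relaxed_nbhd r x \<Longrightarrow> u s y \<le> c"
  shows "upper_relaxed_limit u x \<le> c"
proof -
  have "relaxed_sup u r x \<le> c" unfolding relaxed_sup_def
    by (rule cSUP_least[OF relaxed_nbhd_nonempty[OF assms(1)]]) (use assms(2) in auto)
  then show ?thesis using upper_relaxed_limit_le_relaxed_sup[OF assms(1), of x] by linarith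
qed

lemma upper_relaxed_limit_approx:
  assumes "0 < r" "0 < e"
  obtains s y where "(s, y) \<in> relaxed_nbhd r x" "upper_relaxed_limit u x - e < u s y"
proof -
  have "upper_relaxed_limit u x - e < relaxed_sup u r x"
    using upper_relaxed_limit_le_relaxed_sup[OF assms(1), of x] assms(2) by linarith
  then obtain p where "p \<in> relaxed_nbhd r x" "upper_relaxed_limit u x - e < u (fst p) (snd p)"
    unfolding relaxed_sup_def
    using less_cSUP_iff[OF relaxed_nbhd_nonempty[OF assms(1)] bdd_above_relaxed_nbhd] by blast
  with that show ?thesis by (cases p) auto
qed

lemma upper_relaxed_limit_approx_seq:
  assumes "0 < r"
  obtains s y where "\<And>k. (s k, y k) \<in> relaxed_nbhd r x"
    "\<And>k. upper_relaxed_limit u x - inverse (Suc k) < u (s k) (y k)" "s \<longlonglongrightarrow> 1" "y \<longlonglongrightarrow> x"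
proof -
  define e :: "nat \<Rightarrow> real" where "e k = inverse (Suc k)" for k
  have e0: "0 < e k" for k unfolding e_def by simp
  have "\<exists>p. p \<in> relaxed_nbhd (min r (e k)) x \<and> upper_relaxed_limit u x - e k < u (fst p) (snd p)" for k
    using upper_relaxed_limit_approx[of "min r (e k)" "e k"] assms e0 by (metis fst_conv min_less_iff_conj snd_conv)
  then obtain p where p: "\<And>k. p k \<in> relaxed_nbhd (min r (e k)) x"
    "\<And>k. upper_relaxed_limit u x - e k < u (fst (p k)) (snd (p k))" by metis
  have near: "1 - e k < fst (p k)" "fst (p k) < 1" "dist (snd (p k)) x < e k" for k
    using p(1)[of k] unfolding relaxed_nbhd_def by auto
  have e_lim: "e \<longlonglongrightarrow> 0" unfolding e_def by (rule LIMSEQ_inverse_real_of_nat)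
  show ?thesis
  proof (rule that[of "\<lambda>k. fst (p k)" "\<lambda>k. snd (p k)"])
    show "(fst (p k), snd (p k)) \<in> relaxed_nbhd r x" for k
      using relaxed_nbhd_mono[of "min r (e k)" r x] p(1)[of k] by auto
    show "upper_relaxed_limit u x - inverse (Suc k) < u (fst (p k)) (snd (p k))" for k
      using p(2)[of k] unfolding e_def .
    have lower: "(\<lambda>k. 1 - e k) \<longlonglongrightarrow> 1" using tendsto_diff[OF tendsto_const e_lim, of 1] by simp
    show "(\<lambda>k. fst (p k)) \<longlonglongrightarrow> 1"
      by (rule tendsto_sandwich[OF _ _ lower tendsto_const]) (auto intro!: always_eventually less_imp_le near)
    have "(\<lambda>k. dist (snd (p k)) x) \<longlonglongrightarrow> 0"
      by (rule Lim_null_comparison[OF _ e_lim]) (auto intro!: always_eventually less_imp_le near)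
    then show "(\<lambda>k. snd (p k)) \<longlonglongrightarrow> x" using tendsto_dist_iff by blast
  qed
qed

lemma upper_relaxed_limit_ge_lim:
  assumes s: "\<And>k. 0 < s k \<and> s k < 1" "s \<longlonglongrightarrow> 1" and y: "y \<longlonglongrightarrow> w"
    and G: "G \<longlonglongrightarrow> l" "\<And>k. G k \<le> u (s k) (y k)"
  shows "l \<le> upper_relaxed_limit u w"
proof (rule upper_relaxed_limit_ge)
  fix r :: real assume r: "0 < r"
  have "eventually (\<lambda>k. dist (y k) w < r) sequentially" using y r by (rule tendstoD)
  moreover have "eventually (\<lambda>k. 1 - r < s k) sequentially" using s(2) r by (intro order_tendstoD(1)) auto
  ultimately have "eventually (\<lambda>k. G k \<le> relaxed_sup u r w) sequentially"
  proof eventually_elim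
    case (elim k)
    then have "(s k, y k) \<in> relaxed_nbhd r w" using s(1) unfolding relaxed_nbhd_def by auto
    then show ?case using G(2)[of k] relaxed_sup_upper by fastforce
  qed
  then show "l \<le> relaxed_sup u r w" using tendsto_upperbound[OF G(1)] by simp
qed

lemma upper_relaxed_limit_diff_ge_lim:
  assumes \<psi>: "continuous_on UNIV \<psi>"
    and s: "\<And>k. 0 < s k \<and> s k < 1" "s \<longlonglongrightarrow> 1" and xs: "xs \<longlonglongrightarrow> x" and ys: "ys \<longlonglongrightarrow> w"
    and e: "e \<longlonglongrightarrow> 0" "\<And>k. upper_relaxed_limit u x - e k \<le> u (s k) (xs k)"
    and le: "\<And>k. u (s k) (xs k) - \<psi> (xs k) \<le> u (s k) (ys k) - \<psi> (ys k)"
  shows "upper_relaxed_limit u x - \<psi> x \<le> upper_relaxed_limit u w - \<psi> w"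
proof -
  define G where "G k = upper_relaxed_limit u x - e k - \<psi> (xs k) + \<psi> (ys k)" for k
  have isCont_\<psi>: "isCont \<psi> y" for y using \<psi> by (simp add: continuous_on_eq_continuous_at)
  have "G \<longlonglongrightarrow> upper_relaxed_limit u x - 0 - \<psi> x + \<psi> w"
    unfolding G_def
    by (intro tendsto_intros e(1) isCont_tendsto_compose[OF isCont_\<psi> xs] isCont_tendsto_compose[OF isCont_\<psi> ys])
  moreover have "G k \<le> u (s k) (ys k)" for k using e(2)[of k] le[of k] unfolding G_def by linarith
  ultimately have "upper_relaxed_limit u x - \<psi> x + \<psi> w \<le> upper_relaxed_limit u w"
    using upper_relaxed_limit_ge_lim[OF s ys] by simp
  then show ?thesis by simp
qed

end

lemma usc_diff_continuous:
  assumes "usc f" "continuous_on UNIV \<psi>"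
  shows "usc (\<lambda>x. f x - \<psi> x)"
  unfolding usc_def
proof (intro allI impI)
  fix x :: 'a and e :: real assume e: "0 < e"
  obtain r1 where r1: "r1 > 0" "\<forall>y. dist y x < r1 \<longrightarrow> f y < f x + e/2"
    using assms(1) e unfolding usc_def by (meson half_gt_zero)
  have "continuous (at x) \<psi>" using assms(2) by (simp add: continuous_on_eq_continuous_at)
  then obtain r2 where r2: "r2 > 0" "\<forall>y. dist y x < r2 \<longrightarrow> dist (\<psi> y) (\<psi> x) < e/2"
    using e unfolding continuous_at_eps_delta by (meson half_gt_zero)
  show "\<exists>r>0. \<forall>y. dist y x < r \<longrightarrow> f y - \<psi> y < f x - \<psi> x + e"
  proof (intro exI[of _ "min r1 r2"] conjI allI impI)
    fix y assume "dist y x < min r1 r2"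
    then have "f y < f x + e/2" "dist (\<psi> y) (\<psi> x) < e/2" using r1 r2 by auto
    then show "f y - \<psi> y < f x - \<psi> x + e" unfolding dist_real_def abs_less_iff by linarith
  qed (use r1 r2 in auto)
qed

text \<open>If the supremum S were not attained, every point would have a neighbourhood on which
  f stays below the midpoint of f x and S; finitely many of them cover K.\<close>
lemma usc_attains_max:
  fixes f :: "'a::metric_space \<Rightarrow> real"
  assumes "usc f" "compact K" "K \<noteq> {}" "\<And>x. x \<in> K \<Longrightarrow> f x \<le> C"
  obtains x where "x \<in> K" "\<And>y. y \<in> K \<Longrightarrow> f y \<le> f x"
proof (rule ccontr)
  note max_point = that
  assume "\<not> thesis"
  then have not_max: "\<exists>y\<in>K. f x < f y" if "x \<in> K" for x using max_point that by (meson not_le)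
  define S where "S = (SUP x\<in>K. f x)"
  have bdd: "bdd_above (f ` K)" using assms(4) by (intro bdd_aboveI2) auto
  have fS: "f x < S" if "x \<in> K" for x
    using not_max[OF that] cSUP_upper[OF _ bdd] unfolding S_def by (meson order.strict_trans2)
  have "\<exists>r>0. \<forall>y. dist y x < r \<longrightarrow> f y < f x + (S - f x)/2" if "x \<in> K" for x
    using assms(1) fS[OF that] unfolding usc_def by simp
  then obtain rad where rad: "\<And>x. x \<in> K \<Longrightarrow> rad x > 0 \<and> (\<forall>y. dist y x < rad x \<longrightarrow> f y < f x + (S - f x)/2)"
    by metis
  have "K \<subseteq> (\<Union>x\<in>K. ball x (rad x))" using rad by (auto simp: dist_commute)
  then obtain F where F: "F \<subseteq> K" "finite F" "K \<subseteq> (\<Union>x\<in>F. ball x (rad x))"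
    using compactE_image[OF assms(2), of K "\<lambda>x. ball x (rad x)"] by blast
  then have "F \<noteq> {}" using assms(3) by auto
  define S' where "S' = Max ((\<lambda>x. f x + (S - f x)/2) ` F)"
  have "S' \<in> (\<lambda>x. f x + (S - f x)/2) ` F"
    unfolding S'_def using F \<open>F \<noteq> {}\<close> by (intro Max_in) auto
  then obtain x0 where "x0 \<in> F" "S' = f x0 + (S - f x0)/2" by blast
  moreover have "f x0 < S" using fS \<open>x0 \<in> F\<close> F(1) by blast
  ultimately have S'S: "S' < S" by (simp add: field_simps)
  have "f y \<le> S'" if "y \<in> K" for y
  proof -
    obtain x where x: "x \<in> F" "y \<in> ball x (rad x)" using F(3) \<open>y \<in> K\<close> by blast
    then have "f y < f x + (S - f x)/2" using rad[of x] F(1) by (auto simp: dist_commute)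
    also have "\<dots> \<le> S'" unfolding S'_def using F x by (intro Max_ge) auto
    finally show ?thesis by simp
  qed
  then have "S \<le> S'" unfolding S_def by (intro cSUP_least[OF assms(3)]) auto
  then show False using S'S by simp
qed

lemma usc_diff_attains_max_cball:
  fixes f :: "'a::euclidean_space \<Rightarrow> real"
  assumes "usc f" "\<And>w. f w \<le> B" "continuous_on UNIV \<psi>" "0 \<le> \<rho>"
  obtains y where "y \<in> cball x \<rho>" "\<And>w. w \<in> cball x \<rho> \<Longrightarrow> f w - \<psi> w \<le> f y - \<psi> y"
proof -
  have "bounded (\<psi> ` cball x \<rho>)"
    by (intro compact_imp_bounded compact_continuous_image continuous_on_subset[OF assms(3)]) auto
  then obtain C where C: "\<And>w. w \<in> cball x \<rho> \<Longrightarrow> \<bar>\<psi> w\<bar> \<le> C"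
    unfolding bounded_iff by (metis image_eqI real_norm_def)
  have "f w - \<psi> w \<le> B + C" if "w \<in> cball x \<rho>" for w
    using assms(2)[of w] C[OF that] by linarith
  moreover have "cball x \<rho> \<noteq> {}" using assms(4) by simp
  ultimately show ?thesis
    using usc_attains_max[OF usc_diff_continuous[OF assms(1,3)] compact_cball] that by blast
qed

text \<open>Otherwise a limit w of maximum points of u s - \<psi> staying away from x would satisfy
  U w - \<psi> w \<ge> U x - \<psi> x for the relaxed limit U, contradicting strictness.\<close>
lemma maximizers_near_strict_max:
  fixes u :: "real \<Rightarrow> 'a::euclidean_space \<Rightarrow> real" and \<psi> :: "'a \<Rightarrow> real"
  assumes bounded: "\<forall>s\<in>{0<..<1}. \<forall>x. \<bar>u s x\<bar> \<le> M"
    and usc: "\<forall>s\<in>{0<..<1}. usc (u s)" and \<psi>: "continuous_on UNIV \<psi>"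
    and \<delta>: "0 < \<delta>" "\<delta> < \<rho>" and s0: "s0 < 1"
    and strict_max: "\<forall>w\<in>cball x \<rho>. w \<noteq> x \<longrightarrow>
      upper_relaxed_limit u w - \<psi> w < upper_relaxed_limit u x - \<psi> x"
  shows "\<exists>s y. s0 < s \<and> s < 1 \<and> y \<in> ball x \<delta> \<and> (\<forall>w\<in>cball x \<rho>. u s w - \<psi> w \<le> u s y - \<psi> y)"
proof (rule ccontr)
  assume far: "\<not> ?thesis"
  let ?U = "upper_relaxed_limit u"
  have argmax: "\<exists>y\<in>cball x \<rho>. \<forall>w\<in>cball x \<rho>. u s w - \<psi> w \<le> u s y - \<psi> y" if "0 < s" "s < 1" for s
  proof -
    have "usc (u s)" using usc that by simp
    moreover have "u s w \<le> M" for w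
    proof -
      have "\<bar>u s w\<bar> \<le> M" using bounded that by simp
      then show ?thesis by linarith
    qed
    moreover have "0 \<le> \<rho>" using \<delta> by simp
    ultimately obtain y where "y \<in> cball x \<rho>" "\<And>w. w \<in> cball x \<rho> \<Longrightarrow> u s w - \<psi> w \<le> u s y - \<psi> y"
      using usc_diff_attains_max_cball[OF _ _ \<psi>] by blast
    then show ?thesis by blast
  qed
  obtain sk xk where sk: "\<And>k. (sk k, xk k) \<in> relaxed_nbhd (min (1 - s0) \<rho>) x"
    and approx: "\<And>k. ?U x - inverse (Suc k) < u (sk k) (xk k)" and lim: "sk \<longlonglongrightarrow> 1" "xk \<longlonglongrightarrow> x"
    using upper_relaxed_limit_approx_seq[OF bounded, of "min (1 - s0) \<rho>"] s0 \<delta> by auto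
  have sk01: "0 < sk k \<and> sk k < 1" and sk_s0: "s0 < sk k" and xk: "xk k \<in> cball x \<rho>" for k
    using sk[of k] unfolding relaxed_nbhd_def by (auto simp: dist_commute)
  have "\<forall>k. \<exists>y. y \<in> cball x \<rho> \<and> (\<forall>w\<in>cball x \<rho>. u (sk k) w - \<psi> w \<le> u (sk k) y - \<psi> y)"
    using argmax sk01 by blast
  then obtain yk where yk: "\<And>k. yk k \<in> cball x \<rho>"
    "\<And>k w. w \<in> cball x \<rho> \<Longrightarrow> u (sk k) w - \<psi> w \<le> u (sk k) (yk k) - \<psi> (yk k)"
    by metis
  have "yk k \<notin> ball x \<delta>" for k
  proof
    assume "yk k \<in> ball x \<delta>"
    with sk01[of k] sk_s0[of k] yk(2)[of _ k]
    have "\<exists>s y. s0 < s \<and> s < 1 \<and> y \<in> ball x \<delta> \<and> (\<forall>w\<in>cball x \<rho>. u s w - \<psi> w \<le> u s y - \<psi> y)"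
      by (intro exI[of _ "sk k"] exI[of _ "yk k"]) simp
    with far show False ..
  qed
  then have "\<forall>k. yk k \<in> cball x \<rho> - ball x \<delta>" using yk(1) by blast
  moreover have "seq_compact (cball x \<rho> - ball x \<delta>)"
    by (intro compact_imp_seq_compact compact_diff) auto
  ultimately obtain w \<sigma> where w: "w \<in> cball x \<rho> - ball x \<delta>" "strict_mono \<sigma>" "(yk \<circ> \<sigma>) \<longlonglongrightarrow> w"
    using seq_compactE by metis
  have inv: "(\<lambda>j. inverse (real (Suc (\<sigma> j)))) \<longlonglongrightarrow> 0"
    using LIMSEQ_subseq_LIMSEQ[OF LIMSEQ_inverse_real_of_nat w(2)] by (simp add: o_def)
  have "?U x - \<psi> x \<le> ?U w - \<psi> w"
  proof (rule upper_relaxed_limit_diff_ge_lim[OF bounded \<psi> _ LIMSEQ_subseq_LIMSEQ[OF lim(1) w(2)]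
        LIMSEQ_subseq_LIMSEQ[OF lim(2) w(2)] w(3) inv])
    show "0 < (sk \<circ> \<sigma>) j \<and> (sk \<circ> \<sigma>) j < 1" for j using sk01 by simp
    show "?U x - inverse (Suc (\<sigma> j)) \<le> u ((sk \<circ> \<sigma>) j) ((xk \<circ> \<sigma>) j)" for j
      using approx[of "\<sigma> j"] by simp
    show "u ((sk \<circ> \<sigma>) j) ((xk \<circ> \<sigma>) j) - \<psi> ((xk \<circ> \<sigma>) j)
          \<le> u ((sk \<circ> \<sigma>) j) ((yk \<circ> \<sigma>) j) - \<psi> ((yk \<circ> \<sigma>) j)" for j
      using yk(2)[OF xk] by simp
  qed
  moreover have "w \<noteq> x" using w(1) \<delta> by auto
  then have "?U w - \<psi> w < ?U x - \<psi> x" using strict_max w(1) by blast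
  ultimately show False by linarith
qed

section \<open>Interior points\<close>

lemma C2_hessian_form_le_near:
  assumes "C2_on UNIV \<psi> \<psi>' H" "norm z = 1" "(H x) z \<bullet> z < c"
  obtains \<rho> where "0 < \<rho>" "\<And>w. w \<in> ball x \<rho> \<Longrightarrow> (H w) z \<bullet> z \<le> c"
proof -
  have "continuous_on UNIV H" using assms(1) unfolding C2_on_def by auto
  then have "isCont H x" by (simp add: continuous_on_eq_continuous_at)
  then obtain \<rho> where \<rho>: "0 < \<rho>" "\<And>w. dist w x < \<rho> \<Longrightarrow> dist (H w) (H x) < c - (H x) z \<bullet> z"
    using assms(3) unfolding continuous_at_eps_delta by (meson diff_gt_0_iff_gt)
  show ?thesis
  proof (rule that[OF \<rho>(1)])
    fix w assume "w \<in> ball x \<rho>"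
    then have "norm (H w - H x) < c - (H x) z \<bullet> z" using \<rho>(2)[of w] by (simp add: dist_norm norm_minus_commute)
    moreover have "(H w) z \<bullet> z - (H x) z \<bullet> z = ((H w - H x) z) \<bullet> z"
      by (simp add: blinfun.diff_left inner_diff_left)
    moreover have "\<bar>((H w - H x) z) \<bullet> z\<bar> \<le> norm (H w - H x)"
      by (rule abs_blinfun_inner_le_norm[OF assms(2)])
    ultimately show "(H w) z \<bullet> z \<le> c" by linarith
  qed
qed

lemma nonlocal_sub_not_touched_by_concave:
  fixes \<Omega> :: "'a::euclidean_space set"
  assumes sub: "nonlocal_visc_sub s \<Omega> g v" and v: "\<And>y. \<bar>v y\<bar> \<le> B" and g: "\<And>y. y \<notin> \<Omega> \<Longrightarrow> \<bar>g y\<bar> \<le> B"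
    and C2: "C2_on UNIV \<psi> \<psi>' H" and \<eta>: "0 < \<eta>" and \<delta>: "0 < \<delta>"
    and s: "kernel_threshold \<eta> \<delta> B < s" "s < 1" and z: "norm z = 1"
    and "y \<in> \<Omega>" and max: "\<forall>w\<in>ball y \<delta>. v w - \<psi> w \<le> v y - \<psi> y"
    and concave: "\<And>w. w \<in> ball y \<delta> \<Longrightarrow> (H w) z \<bullet> z \<le> -\<eta>"
  shows False
proof -
  have "E_delta s \<Omega> g (ext_g \<Omega> g v) \<psi> y \<delta> \<le> 0"
    using sub C2 max \<open>y \<in> \<Omega>\<close> \<delta> unfolding nonlocal_visc_sub_def by blast
  moreover have "0 < E_delta s \<Omega> g (ext_g \<Omega> g v) \<psi> y \<delta>"
  proof (rule E_delta_pos_of_second_diff_le[OF C2 \<eta> \<delta> _ s z])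
    show "0 \<le> B" using v[of y] by linarith
    fix t :: real assume t: "0 < t" "t < \<delta>"
    show "second_diff \<psi> y z t \<le> -\<eta> * t\<^sup>2"
    proof (rule C2_second_diff_le[OF C2 t(1)])
      fix \<theta> :: real assume "\<bar>\<theta>\<bar> < t"
      with t z have "y + \<theta> *\<^sub>R z \<in> ball y \<delta>" by (simp add: dist_norm)
      then show "(H (y + \<theta> *\<^sub>R z)) z \<bullet> z \<le> -\<eta>" by (rule concave)
    qed
  next
    show "\<bar>ext_g \<Omega> g (ext_g \<Omega> g v) w - ext_g \<Omega> g v y\<bar> \<le> 2 * B" for w
      by (rule ext_g_oscillation_le[OF v g])
  qed
  ultimately show False by linarith
qed

lemma interior_hessian_form_nonneg:
  fixes \<Omega> :: "'a::euclidean_space set" and u :: "real \<Rightarrow> 'a \<Rightarrow> real"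
  assumes "open \<Omega>" and bounded: "\<forall>s\<in>{0<..<1}. \<forall>x. \<bar>u s x\<bar> \<le> B"
    and g: "\<And>y. y \<notin> \<Omega> \<Longrightarrow> \<bar>g y\<bar> \<le> B"
    and visc: "\<forall>s\<in>{0<..<1}. nonlocal_visc_sub s \<Omega> g (u s)"
    and C2: "C2_on UNIV \<psi> \<psi>' H" and "x \<in> \<Omega>"
    and strict_max: "\<exists>r>0. \<forall>y\<in>ball x r \<inter> closure \<Omega>. y \<noteq> x \<longrightarrow>
      upper_relaxed_limit u y - \<psi> y < upper_relaxed_limit u x - \<psi> x"
    and z: "norm z = 1"
  shows "0 \<le> (H x) z \<bullet> z"
proof (rule ccontr)
  assume "\<not> 0 \<le> (H x) z \<bullet> z"
  define \<eta> where "\<eta> = - ((H x) z \<bullet> z) / 2"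
  have \<eta>: "0 < \<eta>" "(H x) z \<bullet> z < -\<eta>" using \<open>\<not> 0 \<le> (H x) z \<bullet> z\<close> unfolding \<eta>_def by auto
  obtain \<rho>1 where \<rho>1: "0 < \<rho>1" "\<And>w. w \<in> ball x \<rho>1 \<Longrightarrow> (H w) z \<bullet> z \<le> -\<eta>"
    using C2_hessian_form_le_near[OF C2 z \<eta>(2)] by blast
  obtain r where r: "0 < r" "\<forall>y\<in>ball x r \<inter> closure \<Omega>. y \<noteq> x \<longrightarrow>
      upper_relaxed_limit u y - \<psi> y < upper_relaxed_limit u x - \<psi> x"
    using strict_max by blast
  obtain \<rho>2 where \<rho>2: "0 < \<rho>2" "ball x \<rho>2 \<subseteq> \<Omega>" using \<open>open \<Omega>\<close> \<open>x \<in> \<Omega>\<close> openE by blast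
  define \<rho> where "\<rho> = min (min \<rho>1 \<rho>2) r / 2"
  define \<delta> where "\<delta> = \<rho> / 2"
  have \<delta>: "0 < \<delta>" "\<delta> < \<rho>" unfolding \<delta>_def \<rho>_def using \<rho>1 \<rho>2 r by auto
  have cball: "cball x \<rho> \<subseteq> ball x \<rho>1" "cball x \<rho> \<subseteq> \<Omega>" "cball x \<rho> \<subseteq> ball x r"
    using \<rho>1 \<rho>2 r unfolding \<rho>_def by (auto simp: subset_iff)
  have "\<bar>u (1/2) x\<bar> \<le> B" using bounded by simp
  then have B: "0 \<le> B" by linarith
  have usc: "\<forall>s\<in>{0<..<1}. usc (u s)" using visc unfolding nonlocal_visc_sub_def by blast
  have "upper_relaxed_limit u w - \<psi> w < upper_relaxed_limit u x - \<psi> x" if "w \<in> cball x \<rho>" "w \<noteq> x" for w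
    using r(2) that cball(2,3) closure_subset by blast
  then have "\<forall>w\<in>cball x \<rho>. w \<noteq> x \<longrightarrow> upper_relaxed_limit u w - \<psi> w < upper_relaxed_limit u x - \<psi> x"
    by blast
  then obtain s y where s: "kernel_threshold \<eta> \<delta> B < s" "s < 1" and y: "y \<in> ball x \<delta>"
    and max: "\<forall>w\<in>cball x \<rho>. u s w - \<psi> w \<le> u s y - \<psi> y"
    using maximizers_near_strict_max[OF bounded usc C2_continuous[OF C2] \<delta>
        kernel_threshold_lt_1[OF \<eta>(1) \<delta>(1) B]] by blast
  have s01: "s \<in> {0<..<1}" using s unfolding kernel_threshold_def by auto
  have ball_y: "ball y \<delta> \<subseteq> cball x \<rho>"
  proof
    fix w assume "w \<in> ball y \<delta>"
    then have "dist x w < \<delta> + \<delta>" using y dist_triangle[of x w y] by (simp add: dist_commute)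
    then show "w \<in> cball x \<rho>" unfolding \<delta>_def by simp
  qed
  show False
  proof (rule nonlocal_sub_not_touched_by_concave[OF _ _ g C2 \<eta>(1) \<delta>(1) s z])
    show "nonlocal_visc_sub s \<Omega> g (u s)" using visc s01 by blast
    show "\<bar>u s w\<bar> \<le> B" for w using bounded s01 by blast
    show "y \<in> \<Omega>" using y \<delta> cball(2) by auto
    show "\<forall>w\<in>ball y \<delta>. u s w - \<psi> w \<le> u s y - \<psi> y" using max ball_y by blast
    show "(H w) z \<bullet> z \<le> -\<eta>" if "w \<in> ball y \<delta>" for w using that ball_y cball(1) \<rho>1(2) by blast
  qed
qed

section \<open>Twice continuously differentiable functions\<close>

definition is_C2 :: "('a::euclidean_space \<Rightarrow> real) \<Rightarrow> bool" where
  "is_C2 f \<longleftrightarrow> (\<exists>f' H. C2_on UNIV f f' H)"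

lemma C2_onI:
  assumes "\<And>x. (f has_derivative (\<lambda>h. f' x \<bullet> h)) (at x)"
    "\<And>x. (f' has_derivative (\<lambda>h. blinfun_apply (H x) h)) (at x)" "continuous_on UNIV H"
  shows "C2_on UNIV f f' H"
  using assms unfolding C2_on_def by auto

lemma C2_onD:
  assumes "C2_on UNIV f f' H"
  shows "(f has_derivative (\<lambda>h. f' x \<bullet> h)) (at x)" "(f' has_derivative (\<lambda>h. blinfun_apply (H x) h)) (at x)"
    "continuous_on UNIV H" "continuous_on UNIV f'"
proof -
  show d: "(f' has_derivative (\<lambda>h. blinfun_apply (H x) h)) (at x)" for x
    using assms unfolding C2_on_def by auto
  show "(f has_derivative (\<lambda>h. f' x \<bullet> h)) (at x)" "continuous_on UNIV H"
    using assms unfolding C2_on_def by auto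
  show "continuous_on UNIV f'"
    by (meson d continuous_at_imp_continuous_on has_derivative_continuous)
qed

lemma is_C2_add:
  assumes "is_C2 f" "is_C2 g"
  shows "is_C2 (\<lambda>x. f x + g x)"
proof -
  obtain f' Hf g' Hg where f: "C2_on UNIV f f' Hf" and g: "C2_on UNIV g g' Hg"
    using assms unfolding is_C2_def by blast
  have "C2_on UNIV (\<lambda>x. f x + g x) (\<lambda>x. f' x + g' x) (\<lambda>x. Hf x + Hg x)"
  proof (rule C2_onI)
    fix x
    show "((\<lambda>x. f x + g x) has_derivative (\<lambda>h. (f' x + g' x) \<bullet> h)) (at x)"
      using has_derivative_add[OF C2_onD(1)[OF f] C2_onD(1)[OF g]] by (simp add: inner_add_left)
    show "((\<lambda>x. f' x + g' x) has_derivative (\<lambda>h. blinfun_apply (Hf x + Hg x) h)) (at x)"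
      using has_derivative_add[OF C2_onD(2)[OF f] C2_onD(2)[OF g]] by (simp add: blinfun.add_left)
  next
    show "continuous_on UNIV (\<lambda>x. Hf x + Hg x)"
      using C2_onD(3)[OF f] C2_onD(3)[OF g] by (intro continuous_intros)
  qed
  then show ?thesis unfolding is_C2_def by blast
qed

lemma is_C2_cmult:
  assumes "is_C2 f"
  shows "is_C2 (\<lambda>x. c * f x)"
proof -
  obtain f' Hf where f: "C2_on UNIV f f' Hf" using assms unfolding is_C2_def by blast
  have "C2_on UNIV (\<lambda>x. c * f x) (\<lambda>x. c *\<^sub>R f' x) (\<lambda>x. c *\<^sub>R Hf x)"
  proof (rule C2_onI)
    fix x
    show "((\<lambda>x. c * f x) has_derivative (\<lambda>h. (c *\<^sub>R f' x) \<bullet> h)) (at x)"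
      using has_derivative_mult_right[OF C2_onD(1)[OF f], of c] by simp
    show "((\<lambda>x. c *\<^sub>R f' x) has_derivative (\<lambda>h. blinfun_apply (c *\<^sub>R Hf x) h)) (at x)"
      by (rule has_derivative_eq_rhs[OF has_derivative_scaleR_right[OF C2_onD(2)[OF f], of c]])
         (simp add: fun_eq_iff blinfun.scaleR_left)
  next
    show "continuous_on UNIV (\<lambda>x. c *\<^sub>R Hf x)"
      using C2_onD(3)[OF f] by (intro continuous_intros)
  qed
  then show ?thesis unfolding is_C2_def by blast
qed

lemma is_C2_diff: "is_C2 f \<Longrightarrow> is_C2 g \<Longrightarrow> is_C2 (\<lambda>x. f x - g x)"
  using is_C2_add[of f "\<lambda>x. (-1) * g x"] is_C2_cmult[of g "-1"] by simp

lemma is_C2_affine: "is_C2 (\<lambda>x. a \<bullet> x + b)"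
proof -
  have "C2_on UNIV (\<lambda>x. a \<bullet> x + b) (\<lambda>x. a) (\<lambda>x. 0)"
    by (rule C2_onI) (auto intro!: derivative_eq_intros simp: inner_commute)
  then show ?thesis unfolding is_C2_def by blast
qed

lemma is_C2_const: "is_C2 (\<lambda>x. b)"
  using is_C2_affine[of 0 b] by simp

lemma is_C2_inner_diff: "is_C2 (\<lambda>x. a \<bullet> (x - x0))"
  using is_C2_affine[of a "- (a \<bullet> x0)"] by (simp add: inner_diff_right)

lemma is_C2_norm_diff_square: "is_C2 (\<lambda>x. (norm (x - x0))\<^sup>2)"
proof -
  have "C2_on UNIV (\<lambda>x. (norm (x - x0))\<^sup>2) (\<lambda>x. 2 *\<^sub>R (x - x0)) (\<lambda>x. 2 *\<^sub>R id_blinfun)"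
  proof (rule C2_onI)
    fix x
    have e: "(\<lambda>x. (norm (x - x0))\<^sup>2) = (\<lambda>x. (x - x0) \<bullet> (x - x0))" by (simp add: power2_norm_eq_inner)
    show "((\<lambda>x. (norm (x - x0))\<^sup>2) has_derivative (\<lambda>h. (2 *\<^sub>R (x - x0)) \<bullet> h)) (at x)"
      unfolding e by (auto intro!: derivative_eq_intros simp: inner_commute)
    show "((\<lambda>x. 2 *\<^sub>R (x - x0)) has_derivative (\<lambda>h. blinfun_apply (2 *\<^sub>R id_blinfun) h)) (at x)"
      by (rule has_derivative_eq_rhs, (rule derivative_eq_intros)+)
         (auto simp: fun_eq_iff blinfun.scaleR_left)
  qed simp
  then show ?thesis unfolding is_C2_def by blast
qed

lemma is_C2_compose:
  fixes F F' F'' :: "real \<Rightarrow> real"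
  assumes "is_C2 f"
    and dF: "\<And>t. (F has_real_derivative F' t) (at t)"
    and dF': "\<And>t. (F' has_real_derivative F'' t) (at t)"
    and cF'': "continuous_on UNIV F''"
  shows "is_C2 (\<lambda>x. F (f x))"
proof -
  obtain f' Hf where f: "C2_on UNIV f f' Hf" using assms(1) unfolding is_C2_def by blast
  define Hess where "Hess x = F'' (f x) *\<^sub>R (blinfun_scaleR_left (f' x) o\<^sub>L blinfun_inner_left (f' x))
    + F' (f x) *\<^sub>R Hf x" for x
  have "C2_on UNIV (\<lambda>x. F (f x)) (\<lambda>x. F' (f x) *\<^sub>R f' x) Hess"
  proof (rule C2_onI)
    fix x
    have dF1: "(F has_derivative (\<lambda>h. F' (f x) * h)) (at (f x))"
      using dF[of "f x"] by (simp add: has_field_derivative_def)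
    have dF2: "(F' has_derivative (\<lambda>h. F'' (f x) * h)) (at (f x))"
      using dF'[of "f x"] by (simp add: has_field_derivative_def)
    show "((\<lambda>x. F (f x)) has_derivative (\<lambda>h. (F' (f x) *\<^sub>R f' x) \<bullet> h)) (at x)"
      using has_derivative_compose[OF C2_onD(1)[OF f] dF1] by (simp add: o_def)
    have "((\<lambda>x. F' (f x)) has_derivative (\<lambda>h. F'' (f x) * (f' x \<bullet> h))) (at x)"
      using has_derivative_compose[OF C2_onD(1)[OF f] dF2] by (simp add: o_def)
    from has_derivative_scaleR[OF this C2_onD(2)[OF f]]
    show "((\<lambda>x. F' (f x) *\<^sub>R f' x) has_derivative (\<lambda>h. blinfun_apply (Hess x) h)) (at x)"
      by (rule has_derivative_eq_rhs)
         (auto simp: Hess_def fun_eq_iff blinfun.add_left blinfun.scaleR_left inner_commute)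
  next
    have cf: "continuous_on UNIV f"
      using C2_continuous[OF f] .
    have "continuous_on UNIV F'"
      by (meson dF' continuous_at_imp_continuous_on DERIV_isCont)
    then have "continuous_on UNIV (\<lambda>x. F'' (f x))" "continuous_on UNIV (\<lambda>x. F' (f x))"
      using continuous_on_compose2[OF cF'' cf] continuous_on_compose2[OF _ cf] by auto
    then show "continuous_on UNIV Hess"
      unfolding Hess_def using cf C2_onD(3,4)[OF f] by (intro continuous_intros)
  qed
  then show ?thesis unfolding is_C2_def by blast
qed

lemma is_C2_power2: "is_C2 f \<Longrightarrow> is_C2 (\<lambda>x. (f x)\<^sup>2)"
  by (rule is_C2_compose[where F'="\<lambda>t. 2 * t" and F''="\<lambda>t. 2"])
     (auto intro!: derivative_eq_intros)

lemma DERIV_zero_of_square_bound: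
  fixes f :: "real \<Rightarrow> real"
  assumes "f 0 = 0" "\<And>h. \<bar>h\<bar> < 1 \<Longrightarrow> \<bar>f h\<bar> \<le> C * h\<^sup>2"
  shows "(f has_real_derivative 0) (at 0)"
proof -
  have "((\<lambda>h. (f (0 + h) - f 0) / h) \<longlongrightarrow> 0) (at 0)"
  proof (rule Lim_null_comparison)
    show "eventually (\<lambda>h. norm ((f (0 + h) - f 0) / h) \<le> C * \<bar>h\<bar>) (at 0)"
      unfolding eventually_at
    proof (intro exI[of _ 1] conjI ballI impI)
      fix h :: real assume "h \<noteq> 0 \<and> dist h 0 < 1"
      then have h: "\<bar>h\<bar> < 1" "0 < \<bar>h\<bar>" by auto
      have sq: "C * h\<^sup>2 / \<bar>h\<bar> = C * \<bar>h\<bar>" using h(2) by (simp add: field_simps power2_eq_square)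
      have "norm ((f (0 + h) - f 0) / h) = \<bar>f h\<bar> / \<bar>h\<bar>" using assms(1) by simp
      also have "\<dots> \<le> C * h\<^sup>2 / \<bar>h\<bar>" by (rule divide_right_mono[OF assms(2)[OF h(1)]]) simp
      also have "\<dots> = C * \<bar>h\<bar>" by (rule sq)
      finally show "norm ((f (0 + h) - f 0) / h) \<le> C * \<bar>h\<bar>" .
    qed simp
    show "((\<lambda>h. C * \<bar>h\<bar>) \<longlongrightarrow> 0) (at 0)"
      by (auto intro!: tendsto_eq_intros)
  qed
  then show ?thesis by (simp add: DERIV_def)
qed

lemma DERIV_max0_power:
  assumes "2 \<le> n"
  shows "((\<lambda>t. (max 0 t) ^ n) has_real_derivative of_nat n * (max 0 t) ^ (n - 1)) (at t)"
proof (cases "0 < t")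
  case True
  have "((\<lambda>t. t ^ n) has_real_derivative of_nat n * t ^ (n - 1)) (at t)"
    using DERIV_pow[of n t] by simp
  then have "((\<lambda>t. (max 0 t) ^ n) has_real_derivative of_nat n * t ^ (n - 1)) (at t)"
    by (rule has_field_derivative_transform_within_open[where S="{0<..}"]) (use True in auto)
  with True show ?thesis by simp
next
  case False
  show ?thesis
  proof (cases "t < 0")
    case True
    have "((\<lambda>t. 0) has_real_derivative 0) (at t)" by simp
    then have "((\<lambda>t. (max 0 t) ^ n) has_real_derivative 0) (at t)"
      by (rule has_field_derivative_transform_within_open[where S="{..<0}"]) (use True assms in auto)
    moreover have "(max 0 t) ^ (n - 1) = 0" using True assms by (cases n) auto
    ultimately show ?thesis by (simp only: mult_zero_right)
  next
    case False
    with \<open>\<not> 0 < t\<close> have t: "t = 0" by simp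
    have "((\<lambda>t. (max 0 t) ^ n) has_real_derivative 0) (at 0)"
    proof (rule DERIV_zero_of_square_bound[where C=1])
      fix h :: real assume h: "\<bar>h\<bar> < 1"
      have "(max 0 h) ^ n \<le> \<bar>h\<bar> ^ n" by (rule power_mono) auto
      also have "\<bar>h\<bar> ^ n \<le> \<bar>h\<bar> ^ 2" using h assms by (intro power_decreasing) auto
      finally show "\<bar>(max 0 h) ^ n\<bar> \<le> 1 * h\<^sup>2" by simp
    qed (use assms in simp)
    moreover have "(max 0 t) ^ (n - 1) = 0" using t assms by (cases n) auto
    ultimately show ?thesis using t by (simp only: mult_zero_right)
  qed
qed

lemma is_C2_max0_cube:
  assumes "is_C2 f"
  shows "is_C2 (\<lambda>x. (max 0 (f x)) ^ 3)"
proof (rule is_C2_compose[OF assms])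
  show "((\<lambda>t. (max 0 t) ^ 3) has_real_derivative 3 * (max 0 t)\<^sup>2) (at t)" for t :: real
    using DERIV_max0_power[of 3 t] by simp
  show "((\<lambda>t. 3 * (max 0 t)\<^sup>2) has_real_derivative 3 * (2 * max 0 t)) (at t)" for t :: real
    using DERIV_cmult[OF DERIV_max0_power[of 2 t], of 3] by simp
  show "continuous_on UNIV (\<lambda>t::real. 3 * (2 * max 0 t))"
    by (intro continuous_intros)
qed

section \<open>Boundary points\<close>

lemma strictly_convex_imp_convex: "strictly_convex \<Omega> \<Longrightarrow> convex \<Omega>"
  unfolding strictly_convex_def convex_contains_open_segment
  using closure_subset by blast

lemma supporting_unit_normal:
  fixes \<Omega> :: "'a::euclidean_space set"
  assumes "open \<Omega>" "convex \<Omega>" "x0 \<notin> \<Omega>"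
  obtains \<nu> where "norm \<nu> = 1" "\<And>y. y \<in> \<Omega> \<Longrightarrow> \<nu> \<bullet> (y - x0) < 0"
    "\<And>y. y \<in> closure \<Omega> \<Longrightarrow> \<nu> \<bullet> (y - x0) \<le> 0"
proof -
  have "0 \<notin> (+) (-x0) ` \<Omega>" using assms(3) by auto
  then obtain a where a: "a \<noteq> 0" "\<forall>x\<in>(+) (-x0) ` \<Omega>. 0 \<le> a \<bullet> x"
    using separating_hyperplane_set_0[OF convex_translation[OF assms(2)]] by blast
  define \<nu> where "\<nu> = - a /\<^sub>R norm a"
  have \<nu>: "norm \<nu> = 1" unfolding \<nu>_def using a(1) by simp
  then have \<nu>\<nu>: "\<nu> \<bullet> \<nu> = 1" by (simp add: power2_norm_eq_inner[symmetric])
  have le: "\<nu> \<bullet> (y - x0) \<le> 0" if "y \<in> \<Omega>" for y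
  proof -
    have "0 \<le> a \<bullet> (-x0 + y)" using a(2) that by auto
    then show ?thesis unfolding \<nu>_def using a(1)
      by (simp add: inner_commute divide_nonneg_pos algebra_simps)
  qed
  have lt: "\<nu> \<bullet> (y - x0) < 0" if y: "y \<in> \<Omega>" for y
  proof -
    obtain e where e: "e > 0" "ball y e \<subseteq> \<Omega>" using assms(1) y openE by blast
    then have "y + (e/2) *\<^sub>R \<nu> \<in> \<Omega>" using \<nu> by (auto simp: dist_norm)
    then have "\<nu> \<bullet> (y - x0) + e/2 \<le> 0"
      using le[of "y + (e/2) *\<^sub>R \<nu>"] \<nu>\<nu> by (simp add: algebra_simps inner_diff_right)
    with e show ?thesis by linarith
  qed
  have "closure \<Omega> \<subseteq> {y. \<nu> \<bullet> y \<le> \<nu> \<bullet> x0}"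
    by (rule closure_minimal) (use le in \<open>auto simp: inner_diff_right intro: closed_halfspace_le\<close>)
  then have "\<nu> \<bullet> (y - x0) \<le> 0" if "y \<in> closure \<Omega>" for y using that by (auto simp: inner_diff_right)
  with \<nu> lt show ?thesis using that by blast
qed

text \<open>The only use of strictness of the convexity: a point of closure \<Omega> on the supporting
  hyperplane other than x0 would put the midpoint, an interior point, on the hyperplane as well.\<close>
lemma strictly_convex_normal_gap:
  fixes \<Omega> :: "'a::euclidean_space set"
  assumes "strictly_convex \<Omega>" "bounded \<Omega>" "x0 \<in> closure \<Omega>" "0 < r"
    and lt: "\<And>y. y \<in> \<Omega> \<Longrightarrow> \<nu> \<bullet> (y - x0) < 0" and le: "\<And>y. y \<in> closure \<Omega> \<Longrightarrow> \<nu> \<bullet> (y - x0) \<le> 0"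
  obtains \<tau> where "0 < \<tau>" "\<And>w. w \<in> closure \<Omega> \<Longrightarrow> r \<le> dist w x0 \<Longrightarrow> \<nu> \<bullet> (w - x0) \<le> -\<tau>"
proof -
  define F where "F = closure \<Omega> \<inter> {w. r \<le> dist w x0}"
  have "compact F" unfolding F_def using assms(2)
    by (intro compact_Int_closed) (auto simp: compact_closure closed_Collect_le continuous_on_dist continuous_intros)
  show ?thesis
  proof (cases "F = {}")
    case True
    then show ?thesis using that[of 1] unfolding F_def by auto
  next
    case False
    have "continuous_on F (\<lambda>w. \<nu> \<bullet> (w - x0))" by (intro continuous_intros)
    then obtain w where w: "w \<in> F" "\<And>y. y \<in> F \<Longrightarrow> \<nu> \<bullet> (y - x0) \<le> \<nu> \<bullet> (w - x0)"
      using continuous_attains_sup[OF \<open>compact F\<close> False] by blast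
    have wc: "w \<in> closure \<Omega>" "w \<noteq> x0" using w(1) assms(4) unfolding F_def by auto
    have "\<nu> \<bullet> (w - x0) < 0"
    proof (rule ccontr)
      assume "\<not> \<nu> \<bullet> (w - x0) < 0"
      then have "\<nu> \<bullet> (w - x0) = 0" using le[OF wc(1)] by linarith
      moreover have "midpoint x0 w \<in> open_segment x0 w" using wc(2) by simp
      then have "midpoint x0 w \<in> \<Omega>"
        using assms(1,3) wc(1) unfolding strictly_convex_def by blast
      moreover have "\<nu> \<bullet> (midpoint x0 w - x0) = (\<nu> \<bullet> (w - x0)) / 2"
        unfolding midpoint_def by (simp add: algebra_simps inner_diff_right inner_add_right)
      ultimately show False using lt by force
    qed
    then show ?thesis using that[of "- (\<nu> \<bullet> (w - x0))"] w(2) unfolding F_def by force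
  qed
qed

text \<open>The barrier at a boundary point x0 with outer normal \<nu>, in terms of \<xi> = \<nu> \<bullet> (y - x0).
  Near closure \<Omega> both cubic terms vanish and the barrier is the concave quadratic A - K \<xi> - \<xi>^2;
  outside \<Omega> it is lifted above g by the linear term where \<xi> is bounded away below 0, by the
  first cubic term where \<xi> > 2\<delta>, and by the second one (which involves the distance to x0)
  away from x0.\<close>
definition barrier :: "'a::euclidean_space \<Rightarrow> 'a \<Rightarrow> real \<Rightarrow> real \<Rightarrow> real \<Rightarrow> real \<Rightarrow> real \<Rightarrow> real \<Rightarrow> real \<Rightarrow> 'a \<Rightarrow> real" where
  "barrier \<nu> x0 A K K' L \<delta> \<mu> c y =
     A - K * (\<nu> \<bullet> (y - x0)) - (\<nu> \<bullet> (y - x0))\<^sup>2 + K' * (max 0 (\<nu> \<bullet> (y - x0) - \<delta>)) ^ 3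
     + L * (max 0 (\<nu> \<bullet> (y - x0) + \<mu> * (norm (y - x0))\<^sup>2 - c)) ^ 3"

lemma is_C2_barrier: "is_C2 (barrier \<nu> x0 A K K' L \<delta> \<mu> c)"
  unfolding barrier_def
  by (intro is_C2_add is_C2_diff is_C2_const is_C2_cmult is_C2_power2 is_C2_max0_cube
      is_C2_inner_diff is_C2_norm_diff_square)

lemma barrier_center: "0 \<le> \<delta> \<Longrightarrow> 0 \<le> c \<Longrightarrow> barrier \<nu> x0 A K K' L \<delta> \<mu> c x0 = A"
  unfolding barrier_def by simp

lemma barrier_cutoff_arg_nonpos:
  fixes \<Omega> :: "'a::euclidean_space set"
  assumes \<nu>: "norm \<nu> = 1" and le: "\<And>y. y \<in> closure \<Omega> \<Longrightarrow> \<nu> \<bullet> (y - x0) \<le> 0"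
    and gap: "\<And>w. w \<in> closure \<Omega> \<Longrightarrow> r/4 \<le> dist w x0 \<Longrightarrow> \<nu> \<bullet> (w - x0) \<le> -\<tau>0"
    and diam: "\<And>w. w \<in> closure \<Omega> \<Longrightarrow> dist w x0 + 1 \<le> R"
    and \<mu>: "\<mu> = \<tau>0 / (4 * R\<^sup>2)" and c: "c = 3 * \<mu> * r\<^sup>2 / 4"
    and \<delta>: "\<delta> \<le> 1" "\<delta> \<le> r/4" "\<delta> \<le> 3 * \<mu> * r\<^sup>2 / 16" "\<delta> \<le> 3 * \<tau>0 / 4"
    and pos: "0 < \<tau>0" "0 < r"
    and w: "x \<in> closure \<Omega>" "dist w x < \<delta>"
  shows "\<nu> \<bullet> (w - x0) + \<mu> * (norm (w - x0))\<^sup>2 - c \<le> 0"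
proof -
  have R: "0 < R" using diam[OF w(1)] zero_le_dist[of x x0] by linarith
  have \<mu>0: "0 < \<mu>" unfolding \<mu> using pos R by simp
  have "\<nu> \<bullet> (w - x0) = \<nu> \<bullet> (x - x0) + \<nu> \<bullet> (w - x)" by (simp add: inner_diff_right)
  moreover have "\<bar>\<nu> \<bullet> (w - x)\<bar> \<le> dist w x"
    using Cauchy_Schwarz_ineq2[of \<nu> "w - x"] \<nu> by (simp add: dist_norm)
  ultimately have \<xi>: "\<nu> \<bullet> (w - x0) \<le> \<nu> \<bullet> (x - x0) + \<delta>" using w(2) by linarith
  have tri: "dist w x0 \<le> dist w x + dist x x0" by (rule dist_triangle)
  show ?thesis
  proof (cases "dist x x0 < r/4")
    case True
    then have "norm (w - x0) \<le> r/2" using tri w(2) \<delta>(2) by (simp add: dist_norm)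
    then have "(norm (w - x0))\<^sup>2 \<le> (r/2)\<^sup>2" by (rule power_mono) simp
    then have "\<mu> * (norm (w - x0))\<^sup>2 \<le> \<mu> * r\<^sup>2 / 4" using \<mu>0 by (simp add: power_divide)
    moreover have "\<nu> \<bullet> (x - x0) \<le> 0" using le w(1) by blast
    moreover have "\<delta> \<le> 3 * (\<mu> * r\<^sup>2) / 16" "c = 3 * (\<mu> * r\<^sup>2) / 4"
      using \<delta>(3) c by (simp_all add: mult.assoc)
    moreover have "0 \<le> \<mu> * r\<^sup>2" using \<mu>0 by simp
    ultimately show ?thesis using \<xi> by linarith
  next
    case False
    then have "\<nu> \<bullet> (x - x0) \<le> -\<tau>0" using gap w(1) by simp
    have "norm (w - x0) \<le> R" using tri diam[OF w(1)] w(2) \<delta>(1) by (simp add: dist_norm)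
    then have "(norm (w - x0))\<^sup>2 \<le> R\<^sup>2" by (rule power_mono) simp
    then have "\<mu> * (norm (w - x0))\<^sup>2 \<le> \<tau>0 / 4" using \<mu>0 R unfolding \<mu> by (simp add: field_simps)
    moreover have "0 \<le> c" unfolding c using \<mu>0 by simp
    ultimately show ?thesis using \<xi> \<open>\<nu> \<bullet> (x - x0) \<le> -\<tau>0\<close> \<delta>(4) by linarith
  qed
qed

lemma barrier_second_diff:
  assumes \<nu>: "norm \<nu> = 1" and "\<nu> \<bullet> (x - x0) \<le> 0" "0 < t" "t < \<delta>"
    and cutoff: "\<And>w. dist w x < \<delta> \<Longrightarrow> \<nu> \<bullet> (w - x0) + \<mu> * (norm (w - x0))\<^sup>2 - c \<le> 0"
  shows "second_diff (barrier \<nu> x0 A K K' L \<delta> \<mu> c) x \<nu> t = -2 * t\<^sup>2"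
proof -
  define \<xi> where "\<xi> = \<nu> \<bullet> (x - x0)"
  have "\<nu> \<bullet> \<nu> = 1" using \<nu> by (simp add: power2_norm_eq_inner[symmetric])
  then have e: "\<nu> \<bullet> (x + t *\<^sub>R \<nu> - x0) = \<xi> + t" "\<nu> \<bullet> (x - t *\<^sub>R \<nu> - x0) = \<xi> - t"
    unfolding \<xi>_def by (simp_all add: inner_diff_right inner_add_right)
  have quadratic: "barrier \<nu> x0 A K K' L \<delta> \<mu> c w = A - K * (\<nu> \<bullet> (w - x0)) - (\<nu> \<bullet> (w - x0))\<^sup>2"
    if "dist w x < \<delta>" "\<nu> \<bullet> (w - x0) \<le> \<delta>" for w
    using cutoff[OF that(1)] that(2) unfolding barrier_def by simp
  have d: "dist (x + t *\<^sub>R \<nu>) x < \<delta>" "dist (x - t *\<^sub>R \<nu>) x < \<delta>" "dist x x < \<delta>"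
    using \<nu> assms(3,4) by (auto simp: dist_norm)
  have "\<xi> + t \<le> \<delta>" "\<xi> - t \<le> \<delta>" "\<xi> \<le> \<delta>" using assms(2-4) unfolding \<xi>_def by auto
  then have "barrier \<nu> x0 A K K' L \<delta> \<mu> c (x + t *\<^sub>R \<nu>) = A - K * (\<xi> + t) - (\<xi> + t)\<^sup>2"
    "barrier \<nu> x0 A K K' L \<delta> \<mu> c (x - t *\<^sub>R \<nu>) = A - K * (\<xi> - t) - (\<xi> - t)\<^sup>2"
    "barrier \<nu> x0 A K K' L \<delta> \<mu> c x = A - K * \<xi> - \<xi>\<^sup>2"
    using quadratic[OF d(1)] quadratic[OF d(2)] quadratic[OF d(3)] unfolding e \<xi>_def by simp_all
  then show ?thesis
    unfolding second_diff_def by (simp add: power2_eq_square algebra_simps)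
qed

lemma barrier_ge_away_from_center:
  fixes \<nu> x0 :: "'a::euclidean_space"
  assumes \<nu>: "norm \<nu> = 1" and y: "dist y x0 \<le> R"
    and M: "0 \<le> M" and \<tau>: "0 < \<tau>" "\<tau> \<le> \<mu> * r\<^sup>2 / 8" and \<delta>: "0 < \<delta>" and \<mu>: "0 < \<mu>" and r: "0 < r"
    and K: "K = (M + \<bar>A\<bar> + R\<^sup>2) / \<tau>" and K': "K' = (M + \<bar>A\<bar> + K * R + R\<^sup>2) / \<delta> ^ 3"
    and L: "L = (M + \<bar>A\<bar> + 2 * K * \<delta> + R\<^sup>2) / (\<mu> * r\<^sup>2 / 8) ^ 3" and c: "c = 3 * \<mu> * r\<^sup>2 / 4"
    and away: "\<nu> \<bullet> (y - x0) \<le> -\<tau> \<or> 2 * \<delta> < \<nu> \<bullet> (y - x0) \<or> r \<le> dist y x0"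
  shows "M \<le> barrier \<nu> x0 A K K' L \<delta> \<mu> c y"
proof -
  define \<xi> where "\<xi> = \<nu> \<bullet> (y - x0)"
  define p where "p = \<xi> + \<mu> * (norm (y - x0))\<^sup>2 - c"
  have R: "0 \<le> R" using y zero_le_dist[of y x0] by linarith
  have m: "0 < \<mu> * r\<^sup>2 / 8" using \<mu> r by simp
  have K0: "0 \<le> K" and K'0: "0 \<le> K'" and L0: "0 \<le> L"
    unfolding K K' L using \<tau> \<delta> M R m by (auto intro!: divide_nonneg_pos add_nonneg_nonneg)
  have K\<tau>: "K * \<tau> = M + \<bar>A\<bar> + R\<^sup>2" unfolding K using \<tau> by simp
  have K'\<delta>: "K' * \<delta> ^ 3 = M + \<bar>A\<bar> + K * R + R\<^sup>2" unfolding K' using \<delta> by simp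
  have Lm: "L * (\<mu> * r\<^sup>2 / 8) ^ 3 = M + \<bar>A\<bar> + 2 * K * \<delta> + R\<^sup>2"
    unfolding L using \<mu> r by (simp del: power_divide power_mult_distrib)
  have "\<bar>\<xi>\<bar> \<le> R" using Cauchy_Schwarz_ineq2[of \<nu> "y - x0"] \<nu> y unfolding \<xi>_def by (simp add: dist_norm)
  then have \<xi>: "\<xi> \<le> R" "\<xi>\<^sup>2 \<le> R\<^sup>2" using R by (auto simp: abs_le_iff power2_le_iff_abs_le)
  have bar: "barrier \<nu> x0 A K K' L \<delta> \<mu> c y = A - K * \<xi> - \<xi>\<^sup>2 + K' * (max 0 (\<xi> - \<delta>)) ^ 3 + L * (max 0 p) ^ 3"
    unfolding barrier_def \<xi>_def p_def ..
  have cubes: "0 \<le> K' * (max 0 (\<xi> - \<delta>)) ^ 3" "0 \<le> L * (max 0 p) ^ 3" using K'0 L0 by simp_all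
  consider "\<xi> \<le> -\<tau>" | "2 * \<delta> < \<xi>" | "-\<tau> < \<xi>" "\<xi> \<le> 2 * \<delta>" "r \<le> dist y x0"
    using away unfolding \<xi>_def by linarith
  then show ?thesis
  proof cases
    case 1
    then have "K * \<tau> \<le> K * (-\<xi>)" using K0 by (intro mult_left_mono) auto
    then show ?thesis unfolding bar using K\<tau> \<xi> cubes by linarith
  next
    case 2
    then have "\<delta> ^ 3 \<le> (max 0 (\<xi> - \<delta>)) ^ 3" using \<delta> by (intro power_mono) auto
    then have "K' * \<delta> ^ 3 \<le> K' * (max 0 (\<xi> - \<delta>)) ^ 3" using K'0 by (rule mult_left_mono)
    moreover have "K * \<xi> \<le> K * R" using K0 \<xi> by (intro mult_left_mono)
    ultimately show ?thesis unfolding bar using K'\<delta> \<xi> cubes by linarith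
  next
    case 3
    have "r\<^sup>2 \<le> (norm (y - x0))\<^sup>2" using 3(3) r by (intro power_mono) (auto simp: dist_norm)
    then have "\<mu> * r\<^sup>2 \<le> \<mu> * (norm (y - x0))\<^sup>2" using \<mu> by (intro mult_left_mono) auto
    then have "\<mu> * r\<^sup>2 / 8 \<le> p" unfolding p_def c using 3(1) \<tau>(2) by (simp add: field_simps)
    then have "(\<mu> * r\<^sup>2 / 8) ^ 3 \<le> (max 0 p) ^ 3" using m by (intro power_mono) auto
    then have "L * (\<mu> * r\<^sup>2 / 8) ^ 3 \<le> L * (max 0 p) ^ 3" using L0 by (rule mult_left_mono)
    moreover have "K * \<xi> \<le> K * (2 * \<delta>)" using K0 3(2) by (intro mult_left_mono)
    ultimately show ?thesis unfolding bar using Lm \<xi> cubes by (simp add: algebra_simps)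
  qed
qed

lemma barrier_ge_near_center:
  assumes \<xi>: "-\<tau> < \<nu> \<bullet> (y - x0)" "\<nu> \<bullet> (y - x0) \<le> 2 * \<delta>"
    and \<epsilon>: "0 < \<epsilon>" and \<tau>: "0 < \<tau>" "\<tau> \<le> 1" "\<tau> \<le> \<epsilon>/2"
    and \<delta>: "0 < \<delta>" "\<delta> \<le> 1" "\<delta> \<le> \<epsilon> / (8 * K + 1)" "\<delta> \<le> \<epsilon> / 16"
    and K: "0 \<le> K" "0 \<le> K'" "0 \<le> L"
  shows "A - \<epsilon>/2 \<le> barrier \<nu> x0 A K K' L \<delta> \<mu> c y"
proof -
  define \<xi> where "\<xi> = \<nu> \<bullet> (y - x0)"
  have "K * \<xi> + \<xi>\<^sup>2 \<le> \<epsilon>/2"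
  proof (cases "\<xi> \<le> 0")
    case True
    have "K * \<xi> \<le> 0" using K(1) True by (simp add: mult_nonneg_nonpos)
    moreover have "\<xi>\<^sup>2 \<le> \<tau>\<^sup>2" using True \<xi>(1) unfolding \<xi>_def by (intro power2_le_iff_abs_le[THEN iffD2]) auto
    moreover have "\<tau>\<^sup>2 \<le> \<tau>" using \<tau> by (simp add: power2_eq_square mult_le_cancel_left1)
    ultimately show ?thesis using \<tau> by linarith
  next
    case False
    have "K * \<xi> \<le> K * (2 * \<delta>)" using K(1) \<xi>(2) unfolding \<xi>_def by (intro mult_left_mono)
    also have "\<dots> \<le> K * (2 * (\<epsilon> / (8 * K + 1)))" using K(1) \<delta>(3) by (intro mult_left_mono) auto
    also have "\<dots> = 2 * K * (\<epsilon> / (8 * K + 1))" by simp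
    also have "\<dots> \<le> \<epsilon>/4" using K(1) \<epsilon> by (simp add: field_simps)
    finally have "K * \<xi> \<le> \<epsilon>/4" .
    moreover have "\<xi>\<^sup>2 \<le> (2 * \<delta>)\<^sup>2" using False \<xi>(2) unfolding \<xi>_def by (intro power_mono) auto
    moreover have "(2 * \<delta>)\<^sup>2 \<le> 4 * \<delta>" using \<delta> by (simp add: power2_eq_square mult_le_cancel_left1)
    ultimately show ?thesis using \<delta>(4) by linarith
  qed
  moreover have "0 \<le> K' * (max 0 (\<xi> - \<delta>)) ^ 3" "0 \<le> L * (max 0 (\<xi> + \<mu> * (norm (y - x0))\<^sup>2 - c)) ^ 3"
    using K by simp_all
  ultimately show ?thesis unfolding barrier_def \<xi>_def[symmetric] by linarith
qed

lemma nonlocal_sub_le_of_E_delta_pos: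
  fixes \<Omega> :: "'a::euclidean_space set"
  assumes "open \<Omega>" and sub: "nonlocal_visc_sub s \<Omega> g u" and C2: "C2_on UNIV \<phi> \<phi>' H" and "0 < \<delta>"
    and inside: "\<And>w. w \<in> closure \<Omega> \<Longrightarrow> dist w x0 + \<delta> \<le> R"
    and above_g: "\<And>y. y \<in> cball x0 R \<Longrightarrow> y \<notin> \<Omega> \<Longrightarrow> g y \<le> \<phi> y"
    and E_pos: "\<And>x. x \<in> closure \<Omega> \<Longrightarrow> 0 < E_delta s \<Omega> g (ext_g \<Omega> g u) \<phi> x \<delta>"
    and y: "y \<in> cball x0 R"
  shows "u y \<le> \<phi> y"
proof -
  obtain B where "\<And>w. \<bar>u w\<bar> \<le> B"
    using sub unfolding nonlocal_visc_sub_def bounded_iff by (metis rangeI real_norm_def)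
  then have bound: "u w \<le> B" for w by (simp add: abs_le_iff)
  have "usc u" using sub unfolding nonlocal_visc_sub_def by blast
  moreover have "0 \<le> R" using y zero_le_dist[of x0 y] unfolding mem_cball by linarith
  ultimately obtain xh where xh: "xh \<in> cball x0 R"
    and max: "\<And>w. w \<in> cball x0 R \<Longrightarrow> u w - \<phi> w \<le> u xh - \<phi> xh"
    using usc_diff_attains_max_cball[where f=u and \<psi>=\<phi> and x=x0, OF _ bound C2_continuous[OF C2]] by blast
  have "u xh \<le> \<phi> xh"
  proof (cases "xh \<in> closure \<Omega>")
    case True
    have "ball xh \<delta> \<subseteq> cball x0 R"
    proof
      fix w assume "w \<in> ball xh \<delta>"
      then show "w \<in> cball x0 R"
        using inside[OF True] dist_triangle[of x0 w xh] by (simp add: dist_commute)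
    qed
    then have local_max: "\<forall>w\<in>ball xh \<delta>. u w - \<phi> w \<le> u xh - \<phi> xh" using max by blast
    have E: "0 < E_delta s \<Omega> g (ext_g \<Omega> g u) \<phi> xh \<delta>" by (rule E_pos[OF True])
    show ?thesis
    proof (cases "xh \<in> \<Omega>")
      case True
      with sub C2 local_max \<open>0 < \<delta>\<close> have "E_delta s \<Omega> g (ext_g \<Omega> g u) \<phi> xh \<delta> \<le> 0"
        unfolding nonlocal_visc_sub_def by blast
      with E show ?thesis by linarith
    next
      case False
      with \<open>xh \<in> closure \<Omega>\<close> \<open>open \<Omega>\<close> have "xh \<in> frontier \<Omega>" by (simp add: frontier_def interior_open)
      with sub C2 local_max \<open>0 < \<delta>\<close>
      have "min (E_delta s \<Omega> g (ext_g \<Omega> g u) \<phi> xh \<delta>) (u xh - g xh) \<le> 0"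
        unfolding nonlocal_visc_sub_def by blast
      with E above_g[OF xh False] show ?thesis by linarith
    qed
  next
    case False
    then have "u xh \<le> g xh" using sub unfolding nonlocal_visc_sub_def by blast
    moreover have "xh \<notin> \<Omega>" using False closure_subset by blast
    ultimately show ?thesis using above_g[OF xh] by fastforce
  qed
  then show ?thesis using max[OF y] by linarith
qed

lemma nonlocal_sub_below_concave_barrier:
  fixes \<Omega> :: "'a::euclidean_space set"
  assumes "open \<Omega>" and sub: "nonlocal_visc_sub s \<Omega> g v"
    and v: "\<And>y. \<bar>v y\<bar> \<le> B" and g: "\<And>y. y \<notin> \<Omega> \<Longrightarrow> \<bar>g y\<bar> \<le> B"
    and C2: "C2_on UNIV \<phi> \<phi>' H" and \<nu>: "norm \<nu> = 1" and \<delta>: "0 < \<delta>"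
    and s: "kernel_threshold 2 \<delta> B < s" "s < 1"
    and inside: "\<And>w. w \<in> closure \<Omega> \<Longrightarrow> dist w x0 + \<delta> \<le> R"
    and above_g: "\<And>y. y \<in> cball x0 R \<Longrightarrow> y \<notin> \<Omega> \<Longrightarrow> g y \<le> \<phi> y"
    and concave: "\<And>x t. x \<in> closure \<Omega> \<Longrightarrow> 0 < t \<Longrightarrow> t < \<delta> \<Longrightarrow> second_diff \<phi> x \<nu> t \<le> -2 * t\<^sup>2"
    and y: "y \<in> cball x0 R"
  shows "v y \<le> \<phi> y"
proof (rule nonlocal_sub_le_of_E_delta_pos[OF \<open>open \<Omega>\<close> sub C2 \<delta> inside above_g _ y])
  fix x assume "x \<in> closure \<Omega>"
  show "0 < E_delta s \<Omega> g (ext_g \<Omega> g v) \<phi> x \<delta>"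
  proof (rule E_delta_pos_of_second_diff_le[OF C2 _ \<delta> _ s \<nu> concave[OF \<open>x \<in> closure \<Omega>\<close>]])
    show "0 \<le> B" using v[of x] by linarith
    show "\<bar>ext_g \<Omega> g (ext_g \<Omega> g v) w - ext_g \<Omega> g v x\<bar> \<le> 2 * B" for w
      by (rule ext_g_oscillation_le[OF v g])
  qed simp
qed

lemma frontier_normal_and_gap:
  fixes \<Omega> :: "'a::euclidean_space set"
  assumes "open \<Omega>" "strictly_convex \<Omega>" "bounded \<Omega>" "x0 \<in> frontier \<Omega>" "0 < r"
  obtains \<nu> \<tau> R where "norm \<nu> = 1" "\<And>y. y \<in> closure \<Omega> \<Longrightarrow> \<nu> \<bullet> (y - x0) \<le> 0"
    "0 < \<tau>" "\<And>w. w \<in> closure \<Omega> \<Longrightarrow> r \<le> dist w x0 \<Longrightarrow> \<nu> \<bullet> (w - x0) \<le> -\<tau>"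
    "\<And>w. w \<in> closure \<Omega> \<Longrightarrow> dist w x0 + 1 \<le> R"
proof -
  have x0: "x0 \<in> closure \<Omega>" "x0 \<notin> \<Omega>" using assms(1,4) by (auto simp: frontier_def interior_open)
  obtain \<nu> where \<nu>: "norm \<nu> = 1" and lt: "\<And>y. y \<in> \<Omega> \<Longrightarrow> \<nu> \<bullet> (y - x0) < 0"
    and le: "\<And>y. y \<in> closure \<Omega> \<Longrightarrow> \<nu> \<bullet> (y - x0) \<le> 0"
    using supporting_unit_normal[OF assms(1) strictly_convex_imp_convex[OF assms(2)] x0(2)] by blast
  obtain \<tau> where "0 < \<tau>" "\<And>w. w \<in> closure \<Omega> \<Longrightarrow> r \<le> dist w x0 \<Longrightarrow> \<nu> \<bullet> (w - x0) \<le> -\<tau>"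
    using strictly_convex_normal_gap[OF assms(2,3) x0(1) assms(5) lt le] by blast
  moreover obtain D where "\<forall>w\<in>closure \<Omega>. dist w x0 \<le> D"
    using bounded_any_center[of "closure \<Omega>" x0] bounded_closure[OF assms(3)] by (auto simp: dist_commute)
  then have "\<And>w. w \<in> closure \<Omega> \<Longrightarrow> dist w x0 + 1 \<le> D + 1" by simp
  ultimately show ?thesis using that \<nu> le by blast
qed

lemma frontier_barrier:
  fixes \<Omega> :: "'a::euclidean_space set"
  assumes "open \<Omega>" "strictly_convex \<Omega>" "bounded \<Omega>" "continuous_on (- \<Omega>) g"
    and g: "\<And>y. y \<notin> \<Omega> \<Longrightarrow> \<bar>g y\<bar> \<le> M" and x0: "x0 \<in> frontier \<Omega>" and \<epsilon>: "0 < \<epsilon>"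
  obtains \<phi> \<nu> \<delta> R where "is_C2 \<phi>" "\<phi> x0 = g x0 + \<epsilon>" "norm \<nu> = 1" "0 < \<delta>"
    "\<And>w. w \<in> closure \<Omega> \<Longrightarrow> dist w x0 + \<delta> \<le> R"
    "\<And>y. y \<in> cball x0 R \<Longrightarrow> y \<notin> \<Omega> \<Longrightarrow> g y \<le> \<phi> y"
    "\<And>x t. x \<in> closure \<Omega> \<Longrightarrow> 0 < t \<Longrightarrow> t < \<delta> \<Longrightarrow> second_diff \<phi> x \<nu> t = -2 * t\<^sup>2"
proof -
  have x0\<Omega>: "x0 \<in> closure \<Omega>" "x0 \<notin> \<Omega>" using x0 \<open>open \<Omega>\<close> by (auto simp: frontier_def interior_open)
  obtain r1 where r1: "0 < r1" "\<And>y. y \<in> - \<Omega> \<Longrightarrow> dist y x0 < r1 \<Longrightarrow> dist (g y) (g x0) < \<epsilon>/2"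
    using assms(4) x0\<Omega>(2) \<epsilon> unfolding continuous_on_iff by (metis ComplI half_gt_zero)
  define r where "r = min r1 1"
  have r: "0 < r" unfolding r_def using r1 by simp
  obtain \<nu> \<tau>0 R where \<nu>: "norm \<nu> = 1" and le: "\<And>y. y \<in> closure \<Omega> \<Longrightarrow> \<nu> \<bullet> (y - x0) \<le> 0"
    and \<tau>0: "0 < \<tau>0" "\<And>w. w \<in> closure \<Omega> \<Longrightarrow> r/4 \<le> dist w x0 \<Longrightarrow> \<nu> \<bullet> (w - x0) \<le> -\<tau>0"
    and R: "\<And>w. w \<in> closure \<Omega> \<Longrightarrow> dist w x0 + 1 \<le> R"
    using frontier_normal_and_gap[OF assms(1-3) x0] r by (metis zero_less_divide_iff zero_less_numeral)
  define \<mu> where "\<mu> = \<tau>0 / (4 * R\<^sup>2)"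
  have R0: "0 < R" using R[OF x0\<Omega>(1)] by simp
  have \<mu>: "0 < \<mu>" unfolding \<mu>_def using \<tau>0 R0 by simp
  define c where "c = 3 * \<mu> * r\<^sup>2 / 4"
  define \<tau> where "\<tau> = min (\<mu> * r\<^sup>2 / 8) (min 1 (\<epsilon>/2))"
  have \<tau>: "0 < \<tau>" "\<tau> \<le> 1" "\<tau> \<le> \<epsilon>/2" "\<tau> \<le> \<mu> * r\<^sup>2 / 8" unfolding \<tau>_def using \<mu> r \<epsilon> by auto
  define A where "A = g x0 + \<epsilon>"
  define K where "K = (M + \<bar>A\<bar> + R\<^sup>2) / \<tau>"
  have M: "0 \<le> M" using g[OF x0\<Omega>(2)] by linarith
  then have K: "0 \<le> K" unfolding K_def using \<tau> by simp
  define \<delta> where "\<delta> = Min {1, r/4, 3 * \<mu> * r\<^sup>2 / 16, 3 * \<tau>0 / 4, \<epsilon> / (8 * K + 1), \<epsilon> / 16}"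
  have "0 < \<delta>" unfolding \<delta>_def using r \<mu> \<tau>0 \<epsilon> K by (subst Min_gr_iff) auto
  moreover have "\<delta> \<le> 1" "\<delta> \<le> r/4" "\<delta> \<le> 3 * \<mu> * r\<^sup>2 / 16" "\<delta> \<le> 3 * \<tau>0 / 4"
    "\<delta> \<le> \<epsilon> / (8 * K + 1)" "\<delta> \<le> \<epsilon> / 16"
    unfolding \<delta>_def by (rule Min_le; simp)+
  ultimately have \<delta>: "0 < \<delta>" "\<delta> \<le> 1" "\<delta> \<le> r/4" "\<delta> \<le> 3 * \<mu> * r\<^sup>2 / 16" "\<delta> \<le> 3 * \<tau>0 / 4"
    "\<delta> \<le> \<epsilon> / (8 * K + 1)" "\<delta> \<le> \<epsilon> / 16" by blast+
  define K' where "K' = (M + \<bar>A\<bar> + K * R + R\<^sup>2) / \<delta> ^ 3"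
  define L where "L = (M + \<bar>A\<bar> + 2 * K * \<delta> + R\<^sup>2) / (\<mu> * r\<^sup>2 / 8) ^ 3"
  have K'L: "0 \<le> K'" "0 \<le> L" unfolding K'_def L_def using M K R0 \<delta> \<mu> r by auto
  show ?thesis
  proof (rule that[of "barrier \<nu> x0 A K K' L \<delta> \<mu> c" \<nu> \<delta> R])
    show "is_C2 (barrier \<nu> x0 A K K' L \<delta> \<mu> c)" by (rule is_C2_barrier)
    show "barrier \<nu> x0 A K K' L \<delta> \<mu> c x0 = g x0 + \<epsilon>"
      unfolding A_def c_def using \<delta> \<mu> by (intro barrier_center) auto
    show "dist w x0 + \<delta> \<le> R" if "w \<in> closure \<Omega>" for w using R[OF that] \<delta>(2) by linarith
  next
    fix y assume y: "y \<in> cball x0 R" "y \<notin> \<Omega>"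
    show "g y \<le> barrier \<nu> x0 A K K' L \<delta> \<mu> c y"
    proof (cases "-\<tau> < \<nu> \<bullet> (y - x0) \<and> \<nu> \<bullet> (y - x0) \<le> 2 * \<delta> \<and> dist y x0 < r")
      case True
      then have "\<bar>g y - g x0\<bar> < \<epsilon>/2" using r1(2)[of y] y(2) unfolding r_def by (simp add: dist_real_def)
      then have "g y \<le> g x0 + \<epsilon>/2" by linarith
      also have "\<dots> \<le> barrier \<nu> x0 A K K' L \<delta> \<mu> c y"
        using barrier_ge_near_center[of \<tau> \<nu> y x0 \<delta> \<epsilon> K K' L A \<mu> c] True \<epsilon> \<tau> \<delta> K K'L
        unfolding A_def by auto
      finally show ?thesis .
    next
      case False
      have "g y \<le> M" using g[OF y(2)] by linarith
      also have "M \<le> barrier \<nu> x0 A K K' L \<delta> \<mu> c y"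
        by (rule barrier_ge_away_from_center[OF \<nu> _ M \<tau>(1,4) \<delta>(1) \<mu> r K_def K'_def L_def c_def])
           (use y False in \<open>auto simp: dist_commute\<close>)
      finally show ?thesis .
    qed
  next
    fix x t assume x: "x \<in> closure \<Omega>" and t: "0 < t" "t < \<delta>"
    show "second_diff (barrier \<nu> x0 A K K' L \<delta> \<mu> c) x \<nu> t = -2 * t\<^sup>2"
    proof (rule barrier_second_diff[OF \<nu> le[OF x] t])
      fix w assume "dist w x < \<delta>"
      with barrier_cutoff_arg_nonpos[OF \<nu> le \<tau>0(2) R \<mu>_def c_def \<delta>(2-5) \<tau>0(1) r x]
      show "\<nu> \<bullet> (w - x0) + \<mu> * (norm (w - x0))\<^sup>2 - c \<le> 0" by blast
    qed
  qed (use \<nu> \<delta> in auto)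
qed

lemma frontier_upper_relaxed_limit_le:
  fixes \<Omega> :: "'a::euclidean_space set" and u :: "real \<Rightarrow> 'a \<Rightarrow> real"
  assumes "open \<Omega>" "strictly_convex \<Omega>" "bounded \<Omega>" "continuous_on (- \<Omega>) g"
    and g: "\<And>y. y \<notin> \<Omega> \<Longrightarrow> \<bar>g y\<bar> \<le> B"
    and bounded: "\<forall>s\<in>{0<..<1}. \<forall>x. \<bar>u s x\<bar> \<le> B"
    and visc: "\<forall>s\<in>{0<..<1}. nonlocal_visc_sub s \<Omega> g (u s)"
    and x0: "x0 \<in> frontier \<Omega>"
  shows "upper_relaxed_limit u x0 \<le> g x0"
proof (rule field_le_epsilon)
  fix \<epsilon> :: real assume "0 < \<epsilon>"
  then obtain \<phi> \<nu> \<delta> R where "is_C2 \<phi>" and \<phi>x0: "\<phi> x0 = g x0 + \<epsilon>/2" and \<nu>: "norm \<nu> = 1" and \<delta>: "0 < \<delta>"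
    and inside: "\<And>w. w \<in> closure \<Omega> \<Longrightarrow> dist w x0 + \<delta> \<le> R"
    and above_g: "\<And>y. y \<in> cball x0 R \<Longrightarrow> y \<notin> \<Omega> \<Longrightarrow> g y \<le> \<phi> y"
    and concave: "\<And>x t. x \<in> closure \<Omega> \<Longrightarrow> 0 < t \<Longrightarrow> t < \<delta> \<Longrightarrow> second_diff \<phi> x \<nu> t = -2 * t\<^sup>2"
    using frontier_barrier[OF assms(1-4) g x0 half_gt_zero[OF \<open>0 < \<epsilon>\<close>]] by blast
  obtain \<phi>' H where C2: "C2_on UNIV \<phi> \<phi>' H" using \<open>is_C2 \<phi>\<close> unfolding is_C2_def by blast
  have "\<bar>u (1/2) x\<bar> \<le> B" using bounded by simp
  then have B: "0 \<le> B" by linarith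
  define s1 where "s1 = kernel_threshold 2 \<delta> B"
  have below_barrier: "u s y \<le> \<phi> y" if "s1 < s" "s < 1" "y \<in> cball x0 R" for s y
  proof (rule nonlocal_sub_below_concave_barrier[OF \<open>open \<Omega>\<close> _ _ g C2 \<nu> \<delta> _ _ inside above_g])
    have "s \<in> {0<..<1}" using that unfolding s1_def kernel_threshold_def by auto
    then show "nonlocal_visc_sub s \<Omega> g (u s)" "\<bar>u s w\<bar> \<le> B" for w using visc bounded by blast+
  qed (use that concave in \<open>auto simp: s1_def\<close>)
  have "isCont \<phi> x0" using C2_continuous[OF C2] by (simp add: continuous_on_eq_continuous_at)
  then obtain r where r: "0 < r" "\<And>y. dist y x0 < r \<Longrightarrow> dist (\<phi> y) (\<phi> x0) < \<epsilon>/2"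
    using \<open>0 < \<epsilon>\<close> unfolding continuous_at_eps_delta by (meson half_gt_zero)
  have "x0 \<in> closure \<Omega>" using x0 by (simp add: frontier_def)
  then have "0 < R" using inside[of x0] \<delta> by simp
  show "upper_relaxed_limit u x0 \<le> g x0 + \<epsilon>"
  proof (rule upper_relaxed_limit_le[OF bounded])
    show "0 < min r (min (1 - s1) R)"
      using r(1) \<open>0 < R\<close> kernel_threshold_lt_1[of 2 \<delta> B] \<delta> B unfolding s1_def by simp
    fix s y assume "(s, y) \<in> relaxed_nbhd (min r (min (1 - s1) R)) x0"
    then have "s1 < s" "s < 1" "y \<in> cball x0 R" "dist y x0 < r"
      unfolding relaxed_nbhd_def by (auto simp: dist_commute)
    then have "u s y \<le> \<phi> y" "\<bar>\<phi> y - \<phi> x0\<bar> < \<epsilon>/2" using below_barrier r(2) by (auto simp: dist_real_def)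
    then show "u s y \<le> g x0 + \<epsilon>" using \<phi>x0 by linarith
  qed
qed

theorem lemma2p9:
  fixes \<Omega> :: "'a::euclidean_space set"
    and g :: "'a \<Rightarrow> real"
    and u :: "real \<Rightarrow> 'a \<Rightarrow> real"
  assumes "C2_domain \<Omega>" and "strictly_convex \<Omega>" and "bounded \<Omega>"
    and "continuous_on (- \<Omega>) g" and "bounded (g ` (- \<Omega>))"
    and "\<exists>M. \<forall>s\<in>{0<..<1}. \<forall>x. \<bar>u s x\<bar> \<le> M"
    and "\<forall>s\<in>{0<..<1}. nonlocal_visc_sub s \<Omega> g (u s)"
  shows "local_visc_sub \<Omega> g (upper_relaxed_limit u)"
proof -
  have "open \<Omega>" using assms(1) unfolding C2_domain_def by blast
  obtain M where M: "\<forall>s\<in>{0<..<1}. \<forall>x. \<bar>u s x\<bar> \<le> M" using assms(6) by blast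
  obtain Mg where Mg: "\<And>y. y \<notin> \<Omega> \<Longrightarrow> \<bar>g y\<bar> \<le> Mg"
    using assms(5) unfolding bounded_iff by (metis ComplI image_eqI real_norm_def)
  define B where "B = max M Mg"
  have u: "\<forall>s\<in>{0<..<1}. \<forall>x. \<bar>u s x\<bar> \<le> B" using M unfolding B_def by (meson max.coboundedI1)
  have g: "\<And>y. y \<notin> \<Omega> \<Longrightarrow> \<bar>g y\<bar> \<le> B" using Mg unfolding B_def by (meson max.coboundedI2)
  show ?thesis
    unfolding local_visc_sub_def
  proof (intro conjI ballI allI impI)
    fix x assume "x \<in> frontier \<Omega>"
    then show "upper_relaxed_limit u x \<le> g x"
      using frontier_upper_relaxed_limit_le[OF \<open>open \<Omega>\<close> assms(2-4) g u assms(7)] by blast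
  next
    fix \<psi> \<psi>' H x
    assume "C2_on UNIV \<psi> \<psi>' H" "x \<in> \<Omega>"
      "\<exists>r>0. \<forall>y\<in>ball x r \<inter> closure \<Omega>. y \<noteq> x \<longrightarrow>
         upper_relaxed_limit u y - \<psi> y < upper_relaxed_limit u x - \<psi> x"
    moreover obtain b :: 'a where "b \<in> Basis" using nonempty_Basis by blast
    then have "sphere (0::'a) 1 \<noteq> {}" by (metis mem_sphere_0 norm_Basis empty_iff)
    ultimately show "0 \<le> (INF z\<in>sphere 0 1. (H x) z \<bullet> z)"
      using interior_hessian_form_nonneg[OF \<open>open \<Omega>\<close> u g assms(7)] by (intro cINF_greatest) auto
  qed
qed

end
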